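(* Let $G$ be a group, $\mathcal H=\{H_1,\ldots,H_m\}$ a collection of subgroups of $G$, and $X$ a finite relative generating set of $G$ with respect to $\mathcal H$. The following are equivalent: (i) the relative Cayley graph $\Gamma^{rel}=\Gamma^{rel}_X(G)$ is hyperbolic; (ii) the left coset graph $\widetilde\Gamma=\widetilde\Gamma_X(G)$ is hyperbolic. Moreover, if $G$ is generated by $X$ in the usual (non-relative) sense, then (i) and (ii) are also equivalent to: (iii) the coned-off Cayley graph $\widehat\Gamma=\widehat\Gamma_X(G)$ is hyperbolic.
   Context: $X\subset G$ is a relative generating set with respect to $\mathcal H$ if $G$ is generated by $X\cup H_1\cup\cdots\cup H_m$. The relative Cayley graph $\Gamma^{rel}_X(G)$ is the Cayley graph of $G$ with respect to the generating set $X\cup H_1\cup\cdots\cup H_m$. The left coset graph $\widetilde\Gamma_X(G)$ is the oriented graph whose vertex set is $\{gH_i : i=1,\ldots,m,\ g\in G\}$, and for two different cosets $fH_i$, $gH_j$ there is an edge from $fH_i$ to $gH_j$ if and only if there exist $a\in fH_i$, $b\in gH_j$ with $b=ax$ for some $x\in X\cup X^{-1}\cup\{1\}$ (the edge is labelled $(i,j,x)$). If $G$ is generated by $X$, the coned-off Cayley graph $\widehat\Gamma_X(G)$ is obtained from the Cayley graph $\Gamma_X(G)$ by adding, for each left coset $gH_i$ ($i=1,\ldots,m$), a new vertex $v(gH_i)$ and an edge of length $1/2$ from each element of $gH_i$ to $v(gH_i)$. All graphs carry their path metrics (edges of the Cayley graphs have length 1). Hyperbolic means Gromov hyperbolic as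 a geodesic metric space. *)

theory Defs
  imports "HOL-Algebra.Algebra"
begin

text \<open>A (undirected) weighted graph is given by a vertex set V and a set E of
  edges (a, b, l) joining a and b, of length l.  Edges are traversed in both
  directions.\<close>

fun wchain :: "('v \<times> 'v \<times> real) set \<Rightarrow> 'v \<Rightarrow> ('v \<times> 'v \<times> real) list \<Rightarrow> 'v \<Rightarrow> bool" where
  "wchain E u [] v = (u = v)"
| "wchain E u ((a, b, l) # es) v =
     (((a, b, l) \<in> E \<or> (b, a, l) \<in> E) \<and> a = u \<and> wchain E b es v)"

definition walk_length :: "('v \<times> 'v \<times> real) list \<Rightarrow> real" where
  "walk_length es = sum_list (map (\<lambda>(a, b, l). l) es)"

definition gdist :: "('v \<times> 'v \<times> real) set \<Rightarrow> 'v \<Rightarrow> 'v \<Rightarrow> real" where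
  "gdist E u v = Inf {walk_length es | es. wchain E u es v}"

definition graph_connected :: "'v set \<Rightarrow> ('v \<times> 'v \<times> real) set \<Rightarrow> bool" where
  "graph_connected V E \<longleftrightarrow> (\<forall>u\<in>V. \<forall>v\<in>V. \<exists>es. wchain E u es v)"

definition gromov_product :: "('v \<Rightarrow> 'v \<Rightarrow> real) \<Rightarrow> 'v \<Rightarrow> 'v \<Rightarrow> 'v \<Rightarrow> real" where
  "gromov_product d w x y = (d w x + d w y - d x y) / 2"

definition hyperbolic_graph :: "'v set \<Rightarrow> ('v \<times> 'v \<times> real) set \<Rightarrow> bool" where
  "hyperbolic_graph V E \<longleftrightarrow> graph_connected V E \<and>
     (\<exists>\<delta>::real. \<forall>w\<in>V. \<forall>x\<in>V. \<forall>y\<in>V. \<forall>z\<in>V.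
        gromov_product (gdist E) w x z \<ge>
          min (gromov_product (gdist E) w x y) (gromov_product (gdist E) w y z) - \<delta>)"

definition rel_cayley_edges ::
  "('a, 'b) monoid_scheme \<Rightarrow> 'a set \<Rightarrow> (nat \<Rightarrow> 'a set) \<Rightarrow> nat \<Rightarrow> ('a \<times> 'a \<times> real) set" where
  "rel_cayley_edges Gr S H m =
     {(g, monoid.mult Gr g s, 1) | g s. g \<in> carrier Gr \<and> s \<in> S \<union> (\<Union>i\<in>{1..m}. H i)}"

definition coset_vertices ::
  "('a, 'b) monoid_scheme \<Rightarrow> (nat \<Rightarrow> 'a set) \<Rightarrow> nat \<Rightarrow> (nat \<times> 'a set) set" where
  "coset_vertices Gr H m = {(i, l_coset Gr g (H i)) | i g. i \<in> {1..m} \<and> g \<in> carrier Gr}"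

definition coset_edges ::
  "('a, 'b) monoid_scheme \<Rightarrow> 'a set \<Rightarrow> (nat \<Rightarrow> 'a set) \<Rightarrow> nat
     \<Rightarrow> ((nat \<times> 'a set) \<times> (nat \<times> 'a set) \<times> real) set" where
  "coset_edges Gr S H m =
     {(u, v, 1) | u v. u \<in> coset_vertices Gr H m \<and> v \<in> coset_vertices Gr H m \<and> u \<noteq> v \<and>
        (\<exists>a\<in>snd u. \<exists>b\<in>snd v. \<exists>x \<in> S \<union> (m_inv Gr ` S) \<union> {monoid.one Gr}. b = monoid.mult Gr a x)}"

definition coned_vertices ::
  "('a, 'b) monoid_scheme \<Rightarrow> (nat \<Rightarrow> 'a set) \<Rightarrow> nat \<Rightarrow> ('a + (nat \<times> 'a set)) set" where
  "coned_vertices Gr H m = Inl ` carrier Gr \<union> Inr ` coset_vertices Gr H m"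

definition coned_edges ::
  "('a, 'b) monoid_scheme \<Rightarrow> 'a set \<Rightarrow> (nat \<Rightarrow> 'a set) \<Rightarrow> nat
     \<Rightarrow> (('a + (nat \<times> 'a set)) \<times> ('a + (nat \<times> 'a set)) \<times> real) set" where
  "coned_edges Gr S H m =
     {(Inl g, Inl (monoid.mult Gr g x), 1) | g x. g \<in> carrier Gr \<and> x \<in> S}
     \<union> {(Inl g, Inr (i, l_coset Gr g (H i)), 1 / 2) | g i. g \<in> carrier Gr \<and> i \<in> {1..m}}"

end

theory Submission
  imports Defs
begin

text \<open>Hyperbolicity of geodesic spaces, here in the form of Gromov's four-point condition, is a
  quasi-isometry invariant: a quasi-isometry maps geodesic triangles to quasi-geodesic triangles,
  which by the Morse lemma stay uniformly close to geodesic triangles, and slim triangles are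
  equivalent to the four-point condition. The relative Cayley graph and the left coset graph are
  quasi-isometric, \<open>g \<mapsto> g H\<^sub>1\<close> and a choice of coset representatives being coarse inverses of
  each other. In the coned-off graph, a step inside \<open>H\<^sub>i\<close> is replaced by two half edges through
  the cone point of the coset, and cosets have diameter one in the relative Cayley graph; so the
  group elements sit isometrically in the coned-off graph, every vertex is within \<open>1/2\<close> of
  them, and the four-point constants of the two graphs differ by a bounded amount.\<close>

section \<open>Discrete geodesics and Gromov hyperbolicity\<close>

locale pseudometric =
  fixes V :: "'v set" and d :: "'v \<Rightarrow> 'v \<Rightarrow> real"
  assumes nonneg [simp]: "x \<in> V \<Longrightarrow> y \<in> V \<Longrightarrow> 0 \<le> d x y"
    and commute: "x \<in> V \<Longrightarrow> y \<in> V \<Longrightarrow> d x y = d y x"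
    and zero [simp]: "x \<in> V \<Longrightarrow> d x x = 0"
    and triangle: "x \<in> V \<Longrightarrow> y \<in> V \<Longrightarrow> z \<in> V \<Longrightarrow> d x z \<le> d x y + d y z"
begin

lemma triangle3: "a \<in> V \<Longrightarrow> b \<in> V \<Longrightarrow> c \<in> V \<Longrightarrow> e \<in> V \<Longrightarrow> d a e \<le> d a b + d b c + d c e"
  using triangle[of a b c] triangle[of a c e] by simp

end

text \<open>Geodesics are parametrised by \<open>{0..n}\<close>: every space we need is a graph whose edges
  have length one, so integer parameters suffice.\<close>

definition geodesic_seq :: "'v set \<Rightarrow> ('v \<Rightarrow> 'v \<Rightarrow> real) \<Rightarrow> (nat \<Rightarrow> 'v) \<Rightarrow> nat \<Rightarrow> 'v \<Rightarrow> 'v \<Rightarrow> bool" where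
  "geodesic_seq V d p n x y \<longleftrightarrow> p 0 = x \<and> p n = y \<and> (\<forall>i\<le>n. p i \<in> V) \<and>
     (\<forall>i\<le>n. \<forall>j\<le>n. d (p i) (p j) = \<bar>real i - real j\<bar>)"

locale geodesic_pseudometric = pseudometric +
  assumes geodesic_exists: "x \<in> V \<Longrightarrow> y \<in> V \<Longrightarrow> \<exists>p n. geodesic_seq V d p n x y"

definition gromov_hyperbolic :: "'v set \<Rightarrow> ('v \<Rightarrow> 'v \<Rightarrow> real) \<Rightarrow> real \<Rightarrow> bool" where
  "gromov_hyperbolic V d \<delta> \<longleftrightarrow> (\<forall>w\<in>V. \<forall>x\<in>V. \<forall>y\<in>V. \<forall>z\<in>V.
     min (gromov_product d w x y) (gromov_product d w y z) - \<delta> \<le> gromov_product d w x z)"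

definition slim_triangles :: "'v set \<Rightarrow> ('v \<Rightarrow> 'v \<Rightarrow> real) \<Rightarrow> real \<Rightarrow> bool" where
  "slim_triangles V d \<delta> \<longleftrightarrow> (\<forall>p n x y a na z b nb. geodesic_seq V d p n x y \<longrightarrow>
     geodesic_seq V d a na x z \<longrightarrow> geodesic_seq V d b nb z y \<longrightarrow>
     (\<forall>i\<le>n. (\<exists>j\<le>na. d (p i) (a j) \<le> \<delta>) \<or> (\<exists>j\<le>nb. d (p i) (b j) \<le> \<delta>)))"

lemma gromov_hyperbolicD:
  "gromov_hyperbolic V d \<delta> \<Longrightarrow> w \<in> V \<Longrightarrow> x \<in> V \<Longrightarrow> y \<in> V \<Longrightarrow> z \<in> V \<Longrightarrow>
     min (gromov_product d w x y) (gromov_product d w y z) - \<delta> \<le> gromov_product d w x z"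
  unfolding gromov_hyperbolic_def by blast

lemma slim_trianglesD:
  assumes "slim_triangles V d \<delta>" "geodesic_seq V d p n x y" "geodesic_seq V d a na x z"
    "geodesic_seq V d b nb z y" "i \<le> n"
  obtains j where "j \<le> na" "d (p i) (a j) \<le> \<delta>" | j where "j \<le> nb" "d (p i) (b j) \<le> \<delta>"
  using assms unfolding slim_triangles_def by blast

lemma slim_triangles_mono:
  assumes "slim_triangles V d \<delta>" "\<delta> \<le> \<delta>'" shows "slim_triangles V d \<delta>'"
  unfolding slim_triangles_def
proof (intro allI impI)
  fix p n x y a na z b nb i
  assume "geodesic_seq V d p n x y" "geodesic_seq V d a na x z" "geodesic_seq V d b nb z y" "i \<le> n"
  then show "(\<exists>j\<le>na. d (p i) (a j) \<le> \<delta>') \<or> (\<exists>j\<le>nb. d (p i) (b j) \<le> \<delta>')"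
    by (rule slim_trianglesD[OF assms(1)]) (use assms(2) in force)+
qed

lemma gromov_product_double: "2 * gromov_product d w x y = d w x + d w y - d x y"
  unfolding gromov_product_def by simp

lemma geodesic_seqD:
  assumes "geodesic_seq V d p n x y"
  shows "p 0 = x" "p n = y" "i \<le> n \<Longrightarrow> p i \<in> V"
    "i \<le> n \<Longrightarrow> j \<le> n \<Longrightarrow> d (p i) (p j) = \<bar>real i - real j\<bar>"
  using assms unfolding geodesic_seq_def by auto

lemma geodesic_seq_ends: "geodesic_seq V d p n x y \<Longrightarrow> x \<in> V \<and> y \<in> V"
  by (metis geodesic_seqD(1-3) le0 order_refl)

lemma geodesic_seq_dist_start: "geodesic_seq V d p n x y \<Longrightarrow> i \<le> n \<Longrightarrow> d x (p i) = real i"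
  unfolding geodesic_seq_def by force

lemma geodesic_seq_dist_end: "geodesic_seq V d p n x y \<Longrightarrow> i \<le> n \<Longrightarrow> d (p i) y = real n - real i"
  unfolding geodesic_seq_def by force

lemma geodesic_seq_length: "geodesic_seq V d p n x y \<Longrightarrow> d x y = real n"
  using geodesic_seq_dist_start[of V d p n x y n] geodesic_seqD(2) by fastforce

lemma geodesic_seq_rev: "geodesic_seq V d p n x y \<Longrightarrow> geodesic_seq V d (\<lambda>i. p (n - i)) n y x"
  unfolding geodesic_seq_def by auto

lemma geodesic_seq_sub:
  "geodesic_seq V d p n x y \<Longrightarrow> a \<le> b \<Longrightarrow> b \<le> n \<Longrightarrow> geodesic_seq V d (\<lambda>i. p (a + i)) (b - a) (p a) (p b)"
  unfolding geodesic_seq_def by auto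

context pseudometric
begin

lemma gromov_product_le_dist_geodesic:
  assumes g: "geodesic_seq V d p n x y" and i: "i \<le> n" and w: "w \<in> V"
  shows "gromov_product d w x y \<le> d w (p i)"
proof -
  have V: "x \<in> V" "y \<in> V" "p i \<in> V" using geodesic_seq_ends[OF g] geodesic_seqD(3)[OF g i] by auto
  have "d w x \<le> d w (p i) + d (p i) x" "d w y \<le> d w (p i) + d (p i) y"
    using triangle V w by blast+
  moreover have "d (p i) x = real i" using geodesic_seq_dist_start[OF g i] commute V by simp
  ultimately show ?thesis
    using geodesic_seq_dist_end[OF g i] geodesic_seq_length[OF g] gromov_product_double[of d w x y]
    by linarith
qed

text \<open>The point of \<open>[x, z]\<close> at distance \<open>\<lfloor>(x|w,z)\<rfloor>\<close> from \<open>x\<close> is close to \<open>w\<close>: apply the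
  four-point condition once with base point \<open>x\<close> and once with base point \<open>z\<close>.\<close>

lemma gromov_hyperbolic_near_geodesic:
  assumes f: "gromov_hyperbolic V d \<delta>" and g: "geodesic_seq V d p n x z" and w: "w \<in> V"
  shows "\<exists>k\<le>n. d w (p k) \<le> gromov_product d w x z + 2 * \<delta> + 1"
proof -
  have xz: "x \<in> V" "z \<in> V" using geodesic_seq_ends[OF g] by auto
  define t where "t = gromov_product d x w z"
  have dxz: "d x z = n" using geodesic_seq_length[OF g] .
  have sym: "d x w = d w x" "d z w = d w z" "d z x = d x z"
    using commute xz w by metis+
  have "d x z \<le> d x w + d w z" "d w z \<le> d w x + d x z" "d w x \<le> d w z + d z x"
    using triangle xz w by metis+
  then have t: "0 \<le> t" "t \<le> n" using sym dxz gromov_product_double[of d x w z] unfolding t_def by linarith+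
  define k where "k = nat \<lfloor>t\<rfloor>"
  have kt: "real k \<le> t" "t < real k + 1" using t unfolding k_def by linarith+
  have kn: "k \<le> n" using kt t by linarith
  define q where "q = p k"
  have qV: "q \<in> V" using geodesic_seqD(3)[OF g kn] q_def by simp
  have dxq: "d x q = k" using geodesic_seq_dist_start[OF g kn] q_def by simp
  have dzq: "d z q = real n - real k" using geodesic_seq_dist_end[OF g kn] commute qV xz q_def by simp
  have "min (gromov_product d x w z) (gromov_product d x z q) - \<delta> \<le> gromov_product d x w q"
    using gromov_hyperbolicD[OF f] xz w qV by blast
  moreover have "gromov_product d x z q = k" using dxz dxq dzq gromov_product_double[of d x z q] by linarith
  ultimately have "k - \<delta> \<le> gromov_product d x w q" using kt t_def by linarith
  then have via_x: "d w q \<le> d x w - k + 2 * \<delta>"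
    using dxq commute[OF qV w] gromov_product_double[of d x w q] by linarith
  have "min (gromov_product d z w x) (gromov_product d z x q) - \<delta> \<le> gromov_product d z w q"
    using gromov_hyperbolicD[OF f] xz w qV by blast
  moreover have "gromov_product d z x q = real n - real k"
    using dxz dxq dzq sym gromov_product_double[of d z x q] by linarith
  moreover have "gromov_product d z w x = real n - t"
    unfolding t_def using dxz sym gromov_product_double[of d z w x] gromov_product_double[of d x w z] by linarith
  ultimately have "real n - real k - 1 - \<delta> \<le> gromov_product d z w q" using kt by linarith
  then have via_z: "d w q \<le> d z w - (real n - real k) + 2 + 2 * \<delta>"
    using dzq commute[OF qV w] gromov_product_double[of d z w q] by linarith
  have "d w q \<le> gromov_product d w x z + 2 * \<delta> + 1"
    using via_x via_z dxz sym gromov_product_double[of d w x z] by linarith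
  then show ?thesis using kn q_def by blast
qed

text \<open>A point \<open>w\<close> of a side \<open>[x, y]\<close> has \<open>(w|x,y) = 0\<close>, so by the four-point condition one of
  \<open>(w|x,z)\<close>, \<open>(w|z,y)\<close> is at most \<open>\<delta>\<close>, and then \<open>w\<close> is close to the corresponding side.\<close>

lemma gromov_hyperbolic_imp_slim:
  assumes f: "gromov_hyperbolic V d \<delta>"
  shows "slim_triangles V d (3 * \<delta> + 1)"
  unfolding slim_triangles_def
proof (intro allI impI)
  fix p n x y a na z b nb i
  assume g: "geodesic_seq V d p n x y" and ga: "geodesic_seq V d a na x z"
    and gb: "geodesic_seq V d b nb z y" and i: "i \<le> n"
  have V: "x \<in> V" "y \<in> V" "z \<in> V" using geodesic_seq_ends[OF g] geodesic_seq_ends[OF ga] by auto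
  have w: "p i \<in> V" using geodesic_seqD(3)[OF g i] .
  have "gromov_product d (p i) x y = 0"
    using geodesic_seq_dist_start[OF g i] geodesic_seq_dist_end[OF g i] geodesic_seq_length[OF g]
      commute[OF w V(1)] gromov_product_double[of d "p i" x y]
    by simp
  moreover have "min (gromov_product d (p i) x z) (gromov_product d (p i) z y) - \<delta> \<le> gromov_product d (p i) x y"
    using gromov_hyperbolicD[OF f] V w by blast
  ultimately consider "gromov_product d (p i) x z \<le> \<delta>" | "gromov_product d (p i) z y \<le> \<delta>" by linarith
  then show "(\<exists>j\<le>na. d (p i) (a j) \<le> 3 * \<delta> + 1) \<or> (\<exists>j\<le>nb. d (p i) (b j) \<le> 3 * \<delta> + 1)"
    using gromov_hyperbolic_near_geodesic[OF f ga w] gromov_hyperbolic_near_geodesic[OF f gb w]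
    by cases force+
qed

lemma slim_triangles_nonneg: "slim_triangles V d \<delta> \<Longrightarrow> x \<in> V \<Longrightarrow> 0 \<le> \<delta>"
proof -
  assume sl: "slim_triangles V d \<delta>" and x: "x \<in> V"
  have g: "geodesic_seq V d (\<lambda>i. x) 0 x x" unfolding geodesic_seq_def using x by auto
  show "0 \<le> \<delta>" by (rule slim_trianglesD[OF sl g g g, of 0]) (use x in auto)
qed


lemma detour_via_close_point:
  assumes g: "geodesic_seq V d p n x y" and ga: "geodesic_seq V d a na x w"
    and i: "i \<le> n" and j: "j \<le> na" and close: "d (p i) (a j) \<le> \<delta>"
  shows "d w (p i) + real i \<le> d w x + 2 * \<delta>"
proof -
  have V: "x \<in> V" "w \<in> V" "p i \<in> V" "a j \<in> V"
    using geodesic_seq_ends[OF ga] geodesic_seqD(3)[OF g i] geodesic_seqD(3)[OF ga j] by auto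
  have "d w (p i) \<le> d w (a j) + d (a j) (p i)" "d x (p i) \<le> d x (a j) + d (a j) (p i)"
    using triangle V by blast+
  moreover have "d w (a j) = real na - real j" "d w x = real na"
    using geodesic_seq_dist_end[OF ga j] geodesic_seq_length[OF ga] commute V by auto
  ultimately show ?thesis
    using geodesic_seq_dist_start[OF g i] geodesic_seq_dist_start[OF ga j] commute[OF V(3,4)] close
    by linarith
qed

lemma geodesic_back_anchor:
  assumes g: "geodesic_seq V d p n x y" and i0: "i0 \<le> n" and x: "x \<in> Q" and QV: "Q \<subseteq> V"
    and near: "\<And>i. i \<le> n \<Longrightarrow> \<exists>w\<in>Q. d (p i) w \<le> D"
    and far: "\<And>w. w \<in> Q \<Longrightarrow> D \<le> d (p i0) w" and r: "2 * D \<le> real r"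
  obtains w where "w \<in> Q" "d (p (i0 - r)) w \<le> D" "D + d (p (i0 - r)) w \<le> d (p i0) (p (i0 - r))"
proof (cases "r \<le> i0")
  case True
  have "i0 - r \<le> n" using i0 by simp
  then obtain w where "w \<in> Q" "d (p (i0 - r)) w \<le> D" using near by blast
  moreover have "d (p i0) (p (i0 - r)) = real r"
    using geodesic_seqD(4)[OF g i0 \<open>i0 - r \<le> n\<close>] True by simp
  ultimately show ?thesis using that r by fastforce
next
  case False
  have "0 \<le> D" using near[OF i0] QV geodesic_seqD(3)[OF g i0] by (meson nonneg order_trans subsetD)
  moreover have "p (i0 - r) = x" "x \<in> V" using geodesic_seqD(1)[OF g] False x QV by auto
  ultimately show ?thesis using that[of x] x far[OF x] by simp
qed

text \<open>Around the point \<open>p i\<^sub>0\<close> of a geodesic at maximal distance \<open>D\<close> from a set \<open>Q\<close> containing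
  both ends, cut out a window \<open>[p i\<^sub>a, p i\<^sub>b]\<close> of radius about \<open>2 D\<close>: the points closer to
  its ends than the nearest points of \<open>Q\<close> are at distance at least \<open>D\<close> from \<open>p i\<^sub>0\<close>.\<close>

lemma farthest_point_window:
  assumes g: "geodesic_seq V d p n x y" and i0: "i0 \<le> n" and Q: "x \<in> Q" "y \<in> Q" "Q \<subseteq> V"
    and near: "\<And>i. i \<le> n \<Longrightarrow> \<exists>w\<in>Q. d (p i) w \<le> D"
    and far: "\<And>w. w \<in> Q \<Longrightarrow> D \<le> d (p i0) w"
  obtains ia ib wa wb where "ia \<le> i0" "i0 \<le> ib" "ib \<le> n" "real ib - real ia \<le> 4 * D + 2"
    "wa \<in> Q" "wb \<in> Q" "d (p ia) wa \<le> D" "d (p ib) wb \<le> D"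
    "\<And>u. u \<in> V \<Longrightarrow> d (p ia) u \<le> d (p ia) wa \<Longrightarrow> D \<le> d (p i0) u"
    "\<And>u. u \<in> V \<Longrightarrow> d u (p ib) \<le> d wb (p ib) \<Longrightarrow> D \<le> d (p i0) u"
proof -
  have pV: "\<And>i. i \<le> n \<Longrightarrow> p i \<in> V" using geodesic_seqD(3)[OF g] .
  have "0 \<le> D" using near[OF i0] Q(3) pV[OF i0] by (meson nonneg order_trans subsetD)
  define r where "r = nat \<lceil>2 * D\<rceil>"
  have r: "2 * D \<le> real r" "real r \<le> 2 * D + 1" unfolding r_def using \<open>0 \<le> D\<close> by linarith+
  obtain wa where wa: "wa \<in> Q" "d (p (i0 - r)) wa \<le> D" "D + d (p (i0 - r)) wa \<le> d (p i0) (p (i0 - r))"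
    by (rule geodesic_back_anchor[OF g i0 Q(1,3) near far r(1)])
  obtain wb where wb: "wb \<in> Q" "d (p (n - (n - i0 - r))) wb \<le> D"
    "D + d (p (n - (n - i0 - r))) wb \<le> d (p (n - (n - i0))) (p (n - (n - i0 - r)))"
    by (rule geodesic_back_anchor[OF geodesic_seq_rev[OF g], of "n - i0" Q D r])
      (use near far Q r i0 in auto)
  have "n - (n - i0 - r) \<le> i0 + r" "i0 \<le> r + (i0 - r)" "i0 \<le> n - (n - i0 - r)" using i0 by arith+
  then have "real (n - (n - i0 - r)) \<le> real i0 + real r" "real i0 \<le> real r + real (i0 - r)"
    by (metis of_nat_add of_nat_le_iff)+
  then have width: "real (n - (n - i0 - r)) - real (i0 - r) \<le> 4 * D + 2" using r by linarith
  show thesis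
  proof (rule that[of "i0 - r" "n - (n - i0 - r)" wa wb])
    fix u assume u: "u \<in> V" "d (p (i0 - r)) u \<le> d (p (i0 - r)) wa"
    have "i0 - r \<le> n" using i0 by simp
    then show "D \<le> d (p i0) u"
      using triangle[OF pV[OF i0] u(1) pV[of "i0 - r"]] commute[OF u(1) pV[of "i0 - r"]] wa(3) u(2)
      by linarith
  next
    fix u assume u: "u \<in> V" "d u (p (n - (n - i0 - r))) \<le> d wb (p (n - (n - i0 - r)))"
    have "wb \<in> V" using wb(1) Q(3) by blast
    then show "D \<le> d (p i0) u"
      using triangle[OF pV[OF i0] u(1) pV[of "n - (n - i0 - r)"]] wb(3) i0 u(2)
        commute[OF _ pV[of "n - (n - i0 - r)"], of wb] by simp
  qed (use \<open>i0 \<le> n - (n - i0 - r)\<close> width wa wb in auto)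
qed


text \<open>The indices of chain points near consecutive points \<open>p i\<close>, \<open>p (i + 1)\<close> of a geodesic
  differ by a bounded amount and run from \<open>0\<close> to \<open>N\<close>; so every index \<open>j\<^sub>0\<close> is bracketed by
  the indices of two such consecutive points.\<close>

lemma geodesic_bracket:
  fixes N :: nat
  assumes g: "geodesic_seq V d p n (q 0) (q N)" and qV: "\<And>j. j \<le> N \<Longrightarrow> q j \<in> V" and H: "0 \<le> H"
    and near: "\<And>i. i \<le> n \<Longrightarrow> \<exists>j\<le>N. d (p i) (q j) \<le> H" and j0: "j0 \<le> N"
  obtains i j1 j2 where "i \<le> n" "j1 \<le> j0" "j0 \<le> j2" "j2 \<le> N"
    "d (p i) (q j1) \<le> H" "d (q j1) (q j2) \<le> 2 * H + 1"
proof -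
  have pV: "\<And>i. i \<le> n \<Longrightarrow> p i \<in> V" using geodesic_seqD(3)[OF g] .
  define A where "A = {i. i \<le> n \<and> (\<exists>j\<le>j0. d (p i) (q j) \<le> H)}"
  have "d (p 0) (q 0) = 0" using geodesic_seqD(1)[OF g] qV[of 0] by simp
  then have "0 \<in> A" unfolding A_def using H by (intro CollectI conjI exI[of _ 0]) auto
  moreover have "finite A" unfolding A_def by simp
  ultimately have "Max A \<in> A" and A_le: "\<And>i. i \<in> A \<Longrightarrow> i \<le> Max A"
    using Max_in Max_ge by blast+
  then obtain j1 where i1: "Max A \<le> n" and j1: "j1 \<le> j0" "d (p (Max A)) (q j1) \<le> H"
    unfolding A_def by blast
  have V1: "p (Max A) \<in> V" "q j1 \<in> V" using pV[OF i1] qV j1(1) j0 by auto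
  have "\<exists>j2. j0 \<le> j2 \<and> j2 \<le> N \<and> d (q j1) (q j2) \<le> 2 * H + 1"
  proof (cases "Max A = n")
    case True
    then have "d (q j1) (q N) \<le> H" using j1(2) geodesic_seqD(2)[OF g] commute[OF V1] by simp
    then show ?thesis using j0 H by (intro exI[of _ N]) auto
  next
    case False
    then have i1': "Suc (Max A) \<le> n" using i1 by simp
    then obtain j2 where j2: "j2 \<le> N" "d (p (Suc (Max A))) (q j2) \<le> H" using near by blast
    have "Suc (Max A) \<notin> A" using A_le by fastforce
    then have "\<not> j2 \<le> j0" using i1' j2 unfolding A_def by blast
    moreover have "d (q j1) (q j2)
        \<le> d (q j1) (p (Max A)) + d (p (Max A)) (p (Suc (Max A))) + d (p (Suc (Max A))) (q j2)"
      using triangle3[OF V1(2,1) pV[OF i1'] qV[OF j2(1)]] .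
    moreover have "d (p (Max A)) (p (Suc (Max A))) = 1" using geodesic_seqD(4)[OF g i1 i1'] by simp
    ultimately show ?thesis using j1(2) j2 commute[OF V1] by (intro exI[of _ j2]) auto
  qed
  then show thesis using that i1 j1 by blast
qed
end

context geodesic_pseudometric
begin

text \<open>Take the last point \<open>p i\<^sub>0\<close> of \<open>[x, y]\<close> that is \<open>\<delta>\<close>-close to a geodesic \<open>[x, w]\<close>; its
  successor is then \<open>\<delta>\<close>-close to a geodesic \<open>[w, y]\<close>, and the two detour estimates add up.\<close>

lemma slim_near_geodesic:
  assumes sl: "slim_triangles V d \<delta>" and g: "geodesic_seq V d p n x y" and w: "w \<in> V"
  shows "\<exists>k\<le>n. d w (p k) \<le> gromov_product d w x y + 2 * \<delta> + 1"
proof -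
  have xy: "x \<in> V" "y \<in> V" using geodesic_seq_ends[OF g] by auto
  obtain a na where ga: "geodesic_seq V d a na x w" using geodesic_exists xy w by blast
  obtain b nb where gb: "geodesic_seq V d b nb y w" using geodesic_exists xy w by blast
  have \<delta>: "0 \<le> \<delta>" using slim_triangles_nonneg[OF sl xy(1)] .
  have gp: "2 * gromov_product d w x y = d w x + d w y - real n"
    using gromov_product_double[of d w x y] geodesic_seq_length[OF g] by simp
  define A where "A = {i. i \<le> n \<and> (\<exists>j\<le>na. d (p i) (a j) \<le> \<delta>)}"
  have "0 \<in> A" unfolding A_def
    using geodesic_seqD(1)[OF g] geodesic_seqD(1)[OF ga] xy \<delta> by force
  moreover have "finite A" unfolding A_def by simp
  ultimately have "Max A \<in> A" and A_le: "\<And>i. i \<in> A \<Longrightarrow> i \<le> Max A"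
    using Max_in Max_ge by blast+
  then obtain j where i0: "Max A \<le> n" and j: "j \<le> na" "d (p (Max A)) (a j) \<le> \<delta>"
    unfolding A_def by blast
  have near_x: "d w (p (Max A)) + real (Max A) \<le> d w x + 2 * \<delta>"
    using detour_via_close_point[OF g ga i0 j] .
  show ?thesis
  proof (cases "Max A = n")
    case True
    then show ?thesis using near_x gp geodesic_seqD(2)[OF g] \<delta> by (intro exI[of _ n]) auto
  next
    case False
    then have i1: "Suc (Max A) \<le> n" using i0 by simp
    then have "Suc (Max A) \<notin> A" using A_le by fastforce
    then obtain j' where j': "j' \<le> nb" "d (p (Suc (Max A))) (b (nb - j')) \<le> \<delta>"
      using slim_trianglesD[OF sl g ga geodesic_seq_rev[OF gb] i1] i1 unfolding A_def by blast
    have "d w (p (n - (n - Suc (Max A)))) + real (n - Suc (Max A)) \<le> d w y + 2 * \<delta>"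
      by (rule detour_via_close_point[OF geodesic_seq_rev[OF g] gb _ _ ])
        (use i1 j' in \<open>auto simp: diff_le_mono2\<close>)
    then have near_y: "d w (p (Suc (Max A))) + real n - real (Max A) - 1 \<le> d w y + 2 * \<delta>"
      using i1 by simp
    have "d w (p (Max A)) \<le> d w (p (Suc (Max A))) + d (p (Suc (Max A))) (p (Max A))"
      using triangle w geodesic_seqD(3)[OF g] i0 i1 by blast
    moreover have "d (p (Suc (Max A))) (p (Max A)) = 1" using geodesic_seqD(4)[OF g i1 i0] by simp
    ultimately show ?thesis using near_x near_y gp i0 by (intro exI[of _ "Max A"]) auto
  qed
qed

text \<open>The point of \<open>[x, z]\<close> near \<open>w\<close> provided by the previous lemma lies \<open>\<delta>\<close>-close to
  \<open>[x, y] \<union> [y, z]\<close>, and on those sides the distance from \<open>w\<close> is at least the corresponding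
  Gromov product.\<close>

lemma slim_imp_gromov_hyperbolic:
  assumes sl: "slim_triangles V d \<delta>"
  shows "gromov_hyperbolic V d (3 * \<delta> + 1)"
  unfolding gromov_hyperbolic_def
proof (intro ballI)
  fix w x y z assume V: "w \<in> V" "x \<in> V" "y \<in> V" "z \<in> V"
  obtain p3 n3 where g3: "geodesic_seq V d p3 n3 x z" using geodesic_exists V by blast
  obtain p1 n1 where g1: "geodesic_seq V d p1 n1 x y" using geodesic_exists V by blast
  obtain p2 n2 where g2: "geodesic_seq V d p2 n2 y z" using geodesic_exists V by blast
  obtain k where k: "k \<le> n3" "d w (p3 k) \<le> gromov_product d w x z + 2 * \<delta> + 1"
    using slim_near_geodesic[OF sl g3 V(1)] by blast
  obtain u where u: "u \<in> V" "d (p3 k) u \<le> \<delta>"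
    "min (gromov_product d w x y) (gromov_product d w y z) \<le> d w u"
  proof (rule slim_trianglesD[OF sl g3 g1 g2 k(1)])
    fix j assume "j \<le> n1" "d (p3 k) (p1 j) \<le> \<delta>"
    then show thesis
      using that[of "p1 j"] gromov_product_le_dist_geodesic[OF g1 _ V(1)] geodesic_seqD(3)[OF g1]
      by (meson min.coboundedI1)
  next
    fix j assume "j \<le> n2" "d (p3 k) (p2 j) \<le> \<delta>"
    then show thesis
      using that[of "p2 j"] gromov_product_le_dist_geodesic[OF g2 _ V(1)] geodesic_seqD(3)[OF g2]
      by (meson min.coboundedI2)
  qed
  have "d w u \<le> d w (p3 k) + d (p3 k) u" using triangle V(1) geodesic_seqD(3)[OF g3 k(1)] u(1) .
  then show "min (gromov_product d w x y) (gromov_product d w y z) - (3 * \<delta> + 1) \<le> gromov_product d w x z"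
    using u k by linarith
qed


text \<open>Split the quadrilateral along a diagonal.\<close>

lemma slim_quadrilateral:
  assumes sl: "slim_triangles V d \<delta>" and g: "geodesic_seq V d p n x y"
    and ga: "geodesic_seq V d a na x u" and gb: "geodesic_seq V d b nb u v"
    and gc: "geodesic_seq V d c nc v y" and i: "i \<le> n"
  shows "(\<exists>j\<le>na. d (p i) (a j) \<le> 2 * \<delta>) \<or> (\<exists>j\<le>nb. d (p i) (b j) \<le> 2 * \<delta>) \<or>
    (\<exists>j\<le>nc. d (p i) (c j) \<le> 2 * \<delta>)"
proof -
  have V: "x \<in> V" "u \<in> V" "y \<in> V" using geodesic_seq_ends[OF ga] geodesic_seq_ends[OF gc] by auto
  then have \<delta>: "0 \<le> \<delta>" using slim_triangles_nonneg[OF sl] by blast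
  obtain h nh where h: "geodesic_seq V d h nh u y" using geodesic_exists V by blast
  have piV: "p i \<in> V" using geodesic_seqD(3)[OF g i] .
  show ?thesis
  proof (rule slim_trianglesD[OF sl g ga h i])
    fix j assume "j \<le> na" "d (p i) (a j) \<le> \<delta>"
    then show ?thesis using \<delta> by force
  next
    fix t assume t: "t \<le> nh" "d (p i) (h t) \<le> \<delta>"
    have via: "d (p i) w \<le> 2 * \<delta>" if "w \<in> V" "d (h t) w \<le> \<delta>" for w
      using triangle[OF piV geodesic_seqD(3)[OF h t(1)] that(1)] t(2) that(2) by linarith
    show ?thesis
      by (rule slim_trianglesD[OF sl h gb gc t(1)])
        (use via geodesic_seqD(3)[OF gb] geodesic_seqD(3)[OF gc] in blast)+
  qed
qed

end

section \<open>The Morse lemma and quasi-isometry invariance\<close>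

lemma gromov_hyperbolic_pullback:
  assumes hyp: "gromov_hyperbolic V dV \<delta>" and fW: "\<And>x. x \<in> W \<Longrightarrow> f x \<in> V"
    and close: "\<And>x y. x \<in> W \<Longrightarrow> y \<in> W \<Longrightarrow> \<bar>dV (f x) (f y) - dW x y\<bar> \<le> c"
  shows "gromov_hyperbolic W dW (\<delta> + 3 * c)"
  unfolding gromov_hyperbolic_def
proof (intro ballI)
  fix w x y z assume W: "w \<in> W" "x \<in> W" "y \<in> W" "z \<in> W"
  have gp: "gromov_product dW w u v \<le> gromov_product dV (f w) (f u) (f v) + 3 * c / 2"
      "gromov_product dV (f w) (f u) (f v) \<le> gromov_product dW w u v + 3 * c / 2"
    if "u \<in> W" "v \<in> W" for u v
    using close[OF W(1) that(1)] close[OF W(1) that(2)] close[OF that]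
    unfolding gromov_product_def abs_le_iff by (auto simp: field_simps)
  have "min (gromov_product dV (f w) (f x) (f y)) (gromov_product dV (f w) (f y) (f z)) - \<delta>
      \<le> gromov_product dV (f w) (f x) (f z)"
    using gromov_hyperbolicD[OF hyp] fW W by blast
  then show "min (gromov_product dW w x y) (gromov_product dW w y z) - (\<delta> + 3 * c) \<le> gromov_product dW w x z"
    using gp[OF W(2) W(3)] gp[OF W(3) W(4)] gp[OF W(2) W(4)] unfolding min_def by (auto split: if_splits)
qed

lemma eventually_pow2_gt_linear: "\<exists>k0. \<forall>k\<ge>k0. a + b * real k < 2 ^ k"
proof -
  have "(\<lambda>k. a * (1 / 2) ^ k + b * (real k / 2 ^ k)) \<longlonglongrightarrow> a * 0 + b * 0"
    by (intro tendsto_intros LIMSEQ_power_zero lim_n_over_pown) simp_all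
  then have "\<forall>\<^sub>F k in sequentially. a * (1 / 2) ^ k + b * (real k / 2 ^ k) < 1"
    by (rule order_tendstoD) simp
  then show ?thesis
    unfolding eventually_sequentially by (auto simp: field_simps)
qed

definition quasi_geodesic_seq ::
  "'v set \<Rightarrow> ('v \<Rightarrow> 'v \<Rightarrow> real) \<Rightarrow> real \<Rightarrow> real \<Rightarrow> (nat \<Rightarrow> 'v) \<Rightarrow> nat \<Rightarrow> bool" where
  "quasi_geodesic_seq V d lam c q N \<longleftrightarrow> (\<forall>j\<le>N. q j \<in> V) \<and>
     (\<forall>i\<le>N. \<forall>j\<le>N. d (q i) (q j) \<le> lam * \<bar>real i - real j\<bar> + c \<and>
        \<bar>real i - real j\<bar> \<le> lam * (d (q i) (q j) + c))"

lemma quasi_geodesic_seqD: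
  assumes "quasi_geodesic_seq V d lam c q N"
  shows "j \<le> N \<Longrightarrow> q j \<in> V"
    and "i \<le> N \<Longrightarrow> j \<le> N \<Longrightarrow> d (q i) (q j) \<le> lam * \<bar>real i - real j\<bar> + c"
    and "i \<le> N \<Longrightarrow> j \<le> N \<Longrightarrow> \<bar>real i - real j\<bar> \<le> lam * (d (q i) (q j) + c)"
  using assms unfolding quasi_geodesic_seq_def by blast+

lemma quasi_geodesic_seq_between:
  assumes qg: "quasi_geodesic_seq V d lam c q N" and lam: "0 \<le> lam"
    and j: "j1 \<le> j0" "j0 \<le> j2" "j2 \<le> N"
  shows "d (q j0) (q j1) \<le> lam * (lam * (d (q j1) (q j2) + c)) + c"
proof -
  have "real j0 - real j1 \<le> lam * (d (q j1) (q j2) + c)"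
    using quasi_geodesic_seqD(3)[OF qg, of j1 j2] j by simp
  then have "lam * (real j0 - real j1) \<le> lam * (lam * (d (q j1) (q j2) + c))"
    using lam by (rule mult_left_mono)
  then show ?thesis using quasi_geodesic_seqD(2)[OF qg, of j0 j1] j by simp
qed

lemma log_recursion_bounded:
  assumes "0 \<le> \<alpha>" "0 \<le> A" "0 \<le> B"
  shows "\<exists>H. \<forall>D\<ge>0. (\<forall>k. \<alpha> * D + \<beta> \<le> 2 ^ k \<longrightarrow> D \<le> A + B * real k) \<longrightarrow> D \<le> H"
proof -
  obtain k0 where k0: "\<And>k. k0 \<le> k \<Longrightarrow> 2 * (\<alpha> * A + \<beta>) + 2 * \<alpha> * B * real k < 2 ^ k"
    using eventually_pow2_gt_linear by blast
  have "D \<le> A + B * real k0"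
    if "0 \<le> D" and rec: "\<forall>k. \<alpha> * D + \<beta> \<le> 2 ^ k \<longrightarrow> D \<le> A + B * real k" for D
  proof -
    obtain k1 :: nat where "\<alpha> * D + \<beta> < 2 ^ k1" using real_arch_pow[of 2] by auto
    define k where "k = (LEAST k. \<alpha> * D + \<beta> \<le> 2 ^ k)"
    have k: "\<alpha> * D + \<beta> \<le> 2 ^ k"
      unfolding k_def by (rule LeastI[of _ k1]) (use \<open>\<alpha> * D + \<beta> < 2 ^ k1\<close> in simp)
    have Dk: "D \<le> A + B * real k" using rec k by blast
    have "k \<le> k0"
    proof (rule ccontr)
      assume "\<not> k \<le> k0"
      then obtain k' where k': "k = Suc k'" by (cases k) auto
      have "k' < k" using k' by simp
      then have "\<not> \<alpha> * D + \<beta> \<le> 2 ^ k'" unfolding k_def by (rule not_less_Least)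
      then have "2 ^ k < 2 * (\<alpha> * D + \<beta>)" using k' by simp
      also have "\<dots> \<le> 2 * (\<alpha> * (A + B * real k) + \<beta>)"
        using mult_left_mono[OF Dk \<open>0 \<le> \<alpha>\<close>] by simp
      finally show False using k0[of k] \<open>\<not> k \<le> k0\<close> by (simp add: algebra_simps)
    qed
    then show ?thesis using Dk mult_left_mono[of "real k" "real k0" B] assms by simp
  qed
  then show ?thesis by blast
qed

lemma ex_max_on_atMost: "\<exists>i\<le>n. \<forall>i'\<le>n. f i' \<le> f i" for f :: "nat \<Rightarrow> 'a::linorder"
proof -
  have "Max (f ` {..n}) \<in> f ` {..n}" by (rule Max_in) auto
  then obtain i where "i \<le> n" "Max (f ` {..n}) = f i" by blast
  then show ?thesis by (metis Max_ge atMost_iff finite_atMost finite_imageI imageI)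
qed

lemma ex_min_on_atMost: "\<exists>j\<le>N. \<forall>j'\<le>N. f j \<le> f j'" for f :: "nat \<Rightarrow> 'a::linorder"
proof -
  have "Min (f ` {..N}) \<in> f ` {..N}" by (rule Min_in) auto
  then obtain j where "j \<le> N" "Min (f ` {..N}) = f j" by blast
  then show ?thesis by (metis Min_le atMost_iff finite_atMost finite_imageI imageI)
qed

context geodesic_pseudometric
begin

text \<open>Bisect the chain and use slimness of the triangle formed with geodesics to its midpoint;
  the recursion has depth \<open>k\<close>.\<close>

lemma geodesic_near_chain:
  assumes sl: "slim_triangles V d \<delta>" and \<delta>: "0 \<le> \<delta>" and K: "0 \<le> K"
    and qV: "\<And>j. j \<le> N \<Longrightarrow> q j \<in> V" and step: "\<And>j. j < N \<Longrightarrow> d (q j) (q (Suc j)) \<le> K"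
    and ab: "a \<le> b" "b \<le> N" "b - a \<le> 2 ^ k"
    and g: "geodesic_seq V d p n (q a) (q b)" and i: "i \<le> n"
  shows "\<exists>j\<le>N. d (p i) (q j) \<le> \<delta> * real k + K"
  using ab g i
proof (induction k arbitrary: a b p n i)
  case 0
  have "d (q a) (q b) \<le> K"
  proof (cases "b = a")
    case True
    then show ?thesis using qV 0(2) K by simp
  next
    case False
    then have "b = Suc a" using 0(1,3) by simp
    then show ?thesis using step 0(2) by simp
  qed
  then have "d (p i) (q a) \<le> K"
    using geodesic_seq_dist_start[OF 0(4,5)] geodesic_seq_length[OF 0(4)] 0(5)
      commute[of "p i" "q a"] geodesic_seqD(3)[OF 0(4,5)] qV[of a] 0(1,2) by simp
  then show ?case using 0(1,2) by (intro exI[of _ a]) simp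
next
  case (Suc k)
  define m where "m = (a + b) div 2"
  have m: "a \<le> m" "m \<le> b" "m - a \<le> 2 ^ k" "b - m \<le> 2 ^ k" using Suc.prems(1,3) unfolding m_def by auto
  have V: "q a \<in> V" "q m \<in> V" "q b \<in> V" using qV m Suc.prems(2) by auto
  obtain g1 n1 where g1: "geodesic_seq V d g1 n1 (q a) (q m)" using geodesic_exists V by blast
  obtain g2 n2 where g2: "geodesic_seq V d g2 n2 (q m) (q b)" using geodesic_exists V by blast
  have piV: "p i \<in> V" using geodesic_seqD(3)[OF Suc.prems(4,5)] .
  have via: "\<exists>j\<le>N. d (p i) (q j) \<le> \<delta> * real (Suc k) + K"
    if h: "geodesic_seq V d h nt u v" and t: "t \<le> nt" and close: "d (p i) (h t) \<le> \<delta>"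
      and far: "\<exists>j\<le>N. d (h t) (q j) \<le> \<delta> * real k + K" for h nt u v t
  proof -
    obtain j where j: "j \<le> N" "d (h t) (q j) \<le> \<delta> * real k + K" using far by blast
    have "d (p i) (q j) \<le> d (p i) (h t) + d (h t) (q j)"
      using triangle piV geodesic_seqD(3)[OF h t] qV[OF j(1)] .
    then show ?thesis using close j by (intro exI[of _ j]) (auto simp: algebra_simps)
  qed
  show ?case
  proof (rule slim_trianglesD[OF sl Suc.prems(4) g1 g2 Suc.prems(5)])
    fix t assume "t \<le> n1" "d (p i) (g1 t) \<le> \<delta>"
    then show ?thesis using via g1 Suc.IH[OF m(1) _ m(3) g1] m Suc.prems(2) by auto
  next
    fix t assume "t \<le> n2" "d (p i) (g2 t) \<le> \<delta>"
    then show ?thesis using via g2 Suc.IH[OF m(2) Suc.prems(2) m(4) g2] by auto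
  qed
qed

lemma geodesic_near_quasi_geodesic_chord:
  assumes sl: "slim_triangles V d \<delta>" and \<delta>: "0 \<le> \<delta>"
    and qg: "quasi_geodesic_seq V d lam c q N" and lam: "0 \<le> lam" and c: "0 \<le> c"
    and j: "ja \<le> N" "jb \<le> N" "\<bar>real ja - real jb\<bar> \<le> 2 ^ k"
    and g: "geodesic_seq V d p n (q ja) (q jb)" and i: "i \<le> n"
  shows "\<exists>j\<le>N. d (p i) (q j) \<le> \<delta> * real k + (lam + c)"
proof -
  have qV: "\<And>j. j \<le> N \<Longrightarrow> q j \<in> V" using quasi_geodesic_seqD(1)[OF qg] .
  have K: "0 \<le> lam + c" using lam c by simp
  have step: "d (q j) (q (Suc j)) \<le> lam + c" if "j < N" for j
    using quasi_geodesic_seqD(2)[OF qg, of j "Suc j"] that by simp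
  have chain: "\<exists>j\<le>N. d (p' i') (q j) \<le> \<delta> * real k + (lam + c)"
    if "a \<le> b" "b \<le> N" "b - a \<le> 2 ^ k" "geodesic_seq V d p' n' (q a) (q b)" "i' \<le> n'" for a b p' n' i'
    by (rule geodesic_near_chain[OF sl \<delta> K _ _ that]) (use qV step in auto)
  show ?thesis
  proof (cases "ja \<le> jb")
    case True
    have "real (jb - ja) \<le> real (2 ^ k)" using j(3) True by simp
    then have "jb - ja \<le> 2 ^ k" by (simp only: of_nat_le_iff)
    then show ?thesis using chain[OF True j(2) _ g i] by blast
  next
    case False
    have "real (ja - jb) \<le> real (2 ^ k)" using j(3) False by simp
    then have "ja - jb \<le> 2 ^ k" by (simp only: of_nat_le_iff)
    then have "\<exists>j\<le>N. d (p (n - (n - i))) (q j) \<le> \<delta> * real k + (lam + c)"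
      using chain[OF _ j(1) _ geodesic_seq_rev[OF g]] False by simp
    then show ?thesis using i by simp
  qed
qed

text \<open>Join the ends of the window around the farthest point
  \<open>p i\<^sub>0\<close> to their nearest points \<open>q j\<^sub>a\<close>, \<open>q j\<^sub>b\<close> of the quasi-geodesic. Slimness puts \<open>p i\<^sub>0\<close>
  within \<open>2 \<delta>\<close> of the other sides of the quadrilateral; the connecting sides are too far,
  so \<open>p i\<^sub>0\<close> is near a geodesic \<open>[q j\<^sub>a, q j\<^sub>b]\<close>, whose ends are at most \<open>\<lambda>(6 D + 2 + c)\<close>
  indices apart.\<close>

lemma geodesic_farthest_point_bound:
  assumes sl: "slim_triangles V d \<delta>" and \<delta>: "0 \<le> \<delta>"
    and qg: "quasi_geodesic_seq V d lam c q N" and lam: "1 \<le> lam" and c: "0 \<le> c"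
    and g: "geodesic_seq V d p n (q 0) (q N)" and i0: "i0 \<le> n"
    and near: "\<And>i. i \<le> n \<Longrightarrow> \<exists>j\<le>N. d (p i) (q j) \<le> D"
    and far: "\<And>j. j \<le> N \<Longrightarrow> D \<le> d (p i0) (q j)"
    and k: "lam * (6 * D + 2 + c) \<le> 2 ^ k"
  shows "D \<le> 2 * \<delta> + (lam + c) + \<delta> * real k"
proof -
  have \<delta>k: "0 \<le> \<delta> * real k" using \<delta> by simp
  have QV: "q ` {..N} \<subseteq> V" using quasi_geodesic_seqD(1)[OF qg] by auto
  have near': "\<And>i. i \<le> n \<Longrightarrow> \<exists>w\<in>q ` {..N}. d (p i) w \<le> D" using near by fastforce
  have far': "\<And>w. w \<in> q ` {..N} \<Longrightarrow> D \<le> d (p i0) w" using far by blast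
  obtain ia ib wa wb where iab: "ia \<le> i0" "i0 \<le> ib" "ib \<le> n" "real ib - real ia \<le> 4 * D + 2"
    and w: "wa \<in> q ` {..N}" "wb \<in> q ` {..N}" "d (p ia) wa \<le> D" "d (p ib) wb \<le> D"
    and far_a: "\<And>u. u \<in> V \<Longrightarrow> d (p ia) u \<le> d (p ia) wa \<Longrightarrow> D \<le> d (p i0) u"
    and far_b: "\<And>u. u \<in> V \<Longrightarrow> d u (p ib) \<le> d wb (p ib) \<Longrightarrow> D \<le> d (p i0) u"
    by (rule farthest_point_window[OF g i0 _ _ QV near' far']) auto
  obtain ja jb where jab: "ja \<le> N" "wa = q ja" "jb \<le> N" "wb = q jb" using w(1,2) by blast
  have V: "p ia \<in> V" "p ib \<in> V" "wa \<in> V" "wb \<in> V" using geodesic_seqD(3)[OF g] iab w QV by auto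
  have gw: "geodesic_seq V d (\<lambda>t. p (ia + t)) (ib - ia) (p ia) (p ib)"
    using geodesic_seq_sub[OF g _ iab(3)] iab(1,2) by simp
  obtain c1 n1 where c1: "geodesic_seq V d c1 n1 (p ia) wa" using geodesic_exists V by blast
  obtain g0 n0 where g0: "geodesic_seq V d g0 n0 wa wb" using geodesic_exists V by blast
  obtain c2 n2 where c2: "geodesic_seq V d c2 n2 wb (p ib)" using geodesic_exists V by blast
  have "i0 - ia \<le> ib - ia" using iab by simp
  from slim_quadrilateral[OF sl gw c1 g0 c2 this] iab(1)
  consider t where "t \<le> n1" "d (p i0) (c1 t) \<le> 2 * \<delta>" | t where "t \<le> n0" "d (p i0) (g0 t) \<le> 2 * \<delta>"
    | t where "t \<le> n2" "d (p i0) (c2 t) \<le> 2 * \<delta>" by auto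
  then show ?thesis
  proof cases
    case 1
    then have "d (p ia) (c1 t) \<le> d (p ia) wa"
      using geodesic_seq_dist_start[OF c1 1(1)] geodesic_seq_length[OF c1] by simp
    then have "D \<le> d (p i0) (c1 t)" using far_a geodesic_seqD(3)[OF c1 1(1)] by blast
    then show ?thesis using 1(2) \<delta>k lam c by linarith
  next
    case 2
    have "d wa wb \<le> d wa (p ia) + d (p ia) (p ib) + d (p ib) wb" using triangle3 V by blast
    then have "d wa wb \<le> 6 * D + 2"
      using w(3,4) iab(4) commute[OF V(3,1)] geodesic_seq_length[OF gw] iab(1,2) by simp
    then have "lam * (d wa wb + c) \<le> lam * (6 * D + 2 + c)" using lam by (intro mult_left_mono) auto
    then have "lam * (d wa wb + c) \<le> 2 ^ k" using k by linarith
    then have "\<bar>real ja - real jb\<bar> \<le> 2 ^ k" using quasi_geodesic_seqD(3)[OF qg jab(1,3)] jab by simp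
    then obtain j where j: "j \<le> N" "d (g0 t) (q j) \<le> \<delta> * real k + (lam + c)"
      using geodesic_near_quasi_geodesic_chord[OF sl \<delta> qg _ c jab(1,3) _ _ 2(1)] g0 jab lam by auto
    have "d (p i0) (q j) \<le> d (p i0) (g0 t) + d (g0 t) (q j)"
      using triangle geodesic_seqD(3)[OF g i0] geodesic_seqD(3)[OF g0 2(1)] quasi_geodesic_seqD(1)[OF qg j(1)]
      by blast
    then show ?thesis using far[OF j(1)] 2(2) j(2) by linarith
  next
    case 3
    then have "d (c2 t) (p ib) \<le> d wb (p ib)"
      using geodesic_seq_dist_end[OF c2 3(1)] geodesic_seq_length[OF c2] by simp
    then have "D \<le> d (p i0) (c2 t)" using far_b geodesic_seqD(3)[OF c2 3(1)] by blast
    then show ?thesis using 3(2) \<delta>k lam c by linarith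
  qed
qed

text \<open>The distance \<open>D\<close> from the quasi-geodesic of the farthest point of the geodesic satisfies
  \<open>D \<le> 2 \<delta> + \<lambda> + c + \<delta> k\<close> whenever \<open>\<lambda> (6 D + 2 + c) \<le> 2\<^sup>k\<close>, that is \<open>D = O(log D)\<close>; so \<open>D\<close>
  is bounded in terms of \<open>\<delta>\<close>, \<open>\<lambda>\<close> and \<open>c\<close> only.\<close>

lemma geodesic_near_quasi_geodesic:
  assumes sl: "slim_triangles V d \<delta>" and lam: "1 \<le> lam" and c: "0 \<le> c"
  shows "\<exists>H\<ge>0. \<forall>q N p n. quasi_geodesic_seq V d lam c q N \<longrightarrow>
    geodesic_seq V d p n (q 0) (q N) \<longrightarrow> (\<forall>i\<le>n. \<exists>j\<le>N. d (p i) (q j) \<le> H)"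
proof -
  define \<delta>' where "\<delta>' = max \<delta> 0"
  have sl': "slim_triangles V d \<delta>'" and \<delta>': "0 \<le> \<delta>'"
    using slim_triangles_mono[OF sl] unfolding \<delta>'_def by auto
  obtain H where H: "\<forall>D\<ge>0. (\<forall>k. 6 * lam * D + lam * (2 + c) \<le> 2 ^ k \<longrightarrow>
      D \<le> 2 * \<delta>' + (lam + c) + \<delta>' * real k) \<longrightarrow> D \<le> H"
    using log_recursion_bounded[of "6 * lam" "2 * \<delta>' + (lam + c)" \<delta>' "lam * (2 + c)"] lam c \<delta>'
    by fastforce
  have "\<exists>j\<le>N. d (p i) (q j) \<le> max H 0"
    if qg: "quasi_geodesic_seq V d lam c q N" and g: "geodesic_seq V d p n (q 0) (q N)" and i: "i \<le> n"
    for q N p n i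
  proof -
    have "\<forall>i'. \<exists>j. j \<le> N \<and> (\<forall>j'\<le>N. d (p i') (q j) \<le> d (p i') (q j'))"
    proof
      fix i' show "\<exists>j. j \<le> N \<and> (\<forall>j'\<le>N. d (p i') (q j) \<le> d (p i') (q j'))"
        using ex_min_on_atMost[of N "\<lambda>j. d (p i') (q j)"] by blast
    qed
    then obtain near where near: "\<forall>i'. near i' \<le> N \<and> (\<forall>j\<le>N. d (p i') (q (near i')) \<le> d (p i') (q j))"
      by (rule choice[THEN exE])
    obtain i0 where i0: "i0 \<le> n" "\<forall>i'\<le>n. d (p i') (q (near i')) \<le> d (p i0) (q (near i0))"
      using ex_max_on_atMost[of n "\<lambda>i'. d (p i') (q (near i'))"] by blast
    define D where "D = d (p i0) (q (near i0))"
    have near_D: "\<exists>j\<le>N. d (p i') (q j) \<le> D" if "i' \<le> n" for i'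
      using near i0(2) that unfolding D_def by blast
    have far_D: "D \<le> d (p i0) (q j)" if "j \<le> N" for j
      using near that unfolding D_def by blast
    have "0 \<le> D"
      unfolding D_def using geodesic_seqD(3)[OF g i0(1)] quasi_geodesic_seqD(1)[OF qg] near by simp
    moreover have "\<forall>k. 6 * lam * D + lam * (2 + c) \<le> 2 ^ k \<longrightarrow> D \<le> 2 * \<delta>' + (lam + c) + \<delta>' * real k"
    proof (intro allI impI)
      fix k assume "6 * lam * D + lam * (2 + c) \<le> 2 ^ k"
      then have "lam * (6 * D + 2 + c) \<le> 2 ^ k" by (simp add: algebra_simps)
      then show "D \<le> 2 * \<delta>' + (lam + c) + \<delta>' * real k"
        using geodesic_farthest_point_bound[OF sl' \<delta>' qg lam c g i0(1)] near_D far_D by presburger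
    qed
    ultimately have "D \<le> H" using H by blast
    then show "\<exists>j\<le>N. d (p i) (q j) \<le> max H 0" using near_D[OF i] by force
  qed
  then show ?thesis by (intro exI[of _ "max H 0"]) auto
qed

lemma quasi_geodesic_near_geodesic:
  assumes sl: "slim_triangles V d \<delta>" and lam: "1 \<le> lam" and c: "0 \<le> c"
  shows "\<exists>H'. \<forall>q N p n. quasi_geodesic_seq V d lam c q N \<longrightarrow>
    geodesic_seq V d p n (q 0) (q N) \<longrightarrow> (\<forall>j\<le>N. \<exists>i\<le>n. d (q j) (p i) \<le> H')"
proof -
  obtain H where H0: "0 \<le> H" and H: "\<forall>q N p n. quasi_geodesic_seq V d lam c q N \<longrightarrow>
      geodesic_seq V d p n (q 0) (q N) \<longrightarrow> (\<forall>i\<le>n. \<exists>j\<le>N. d (p i) (q j) \<le> H)"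
    using geodesic_near_quasi_geodesic[OF sl lam c] by blast
  have "\<exists>i\<le>n. d (q j0) (p i) \<le> lam * (lam * (2 * H + 1 + c)) + c + H"
    if qg: "quasi_geodesic_seq V d lam c q N" and g: "geodesic_seq V d p n (q 0) (q N)"
      and j0: "j0 \<le> N" for q N p n j0
  proof -
    have qV: "\<And>j. j \<le> N \<Longrightarrow> q j \<in> V" using quasi_geodesic_seqD(1)[OF qg] .
    have near: "\<And>i. i \<le> n \<Longrightarrow> \<exists>j\<le>N. d (p i) (q j) \<le> H" using H qg g by blast
    obtain i j1 j2 where i: "i \<le> n" and j: "j1 \<le> j0" "j0 \<le> j2" "j2 \<le> N"
      and close: "d (p i) (q j1) \<le> H" "d (q j1) (q j2) \<le> 2 * H + 1"
      by (rule geodesic_bracket[OF g qV H0 near j0])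
    have V: "p i \<in> V" "q j1 \<in> V" "q j0 \<in> V" using geodesic_seqD(3)[OF g i] qV j by auto
    have "d (q j0) (q j1) \<le> lam * (lam * (d (q j1) (q j2) + c)) + c"
      using quasi_geodesic_seq_between[OF qg _ j] lam by simp
    also have "\<dots> \<le> lam * (lam * (2 * H + 1 + c)) + c"
      using close(2) lam by (intro add_right_mono mult_left_mono) auto
    finally have "d (q j0) (q j1) \<le> lam * (lam * (2 * H + 1 + c)) + c" .
    moreover have "d (q j0) (p i) \<le> d (q j0) (q j1) + d (q j1) (p i)"
      using triangle[OF V(3,2,1)] .
    ultimately show ?thesis using i close(1) commute[OF V(1,2)] by (intro exI[of _ i]) auto
  qed
  then show ?thesis by blast
qed

end

lemma quasi_geodesic_seq_image:
  assumes g: "geodesic_seq VX dX p n x y" and f: "\<And>x. x \<in> VX \<Longrightarrow> f x \<in> VY"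
    and qi: "\<And>a b. a \<in> VX \<Longrightarrow> b \<in> VX \<Longrightarrow>
      dY (f a) (f b) \<le> lam * dX a b + c \<and> dX a b \<le> lam * (dY (f a) (f b) + c)"
  shows "quasi_geodesic_seq VY dY lam c (\<lambda>i. f (p i)) n"
  unfolding quasi_geodesic_seq_def
proof (intro conjI allI impI)
  fix j assume "j \<le> n"
  then show "f (p j) \<in> VY" using f geodesic_seqD(3)[OF g] by blast
next
  fix i j assume ij: "i \<le> n" "j \<le> n"
  have V: "p i \<in> VX" "p j \<in> VX" using geodesic_seqD(3)[OF g] ij by auto
  show "dY (f (p i)) (f (p j)) \<le> lam * \<bar>real i - real j\<bar> + c"
    and "\<bar>real i - real j\<bar> \<le> lam * (dY (f (p i)) (f (p j)) + c)"
    using qi[OF V] geodesic_seqD(4)[OF g ij] by simp_all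
qed

text \<open>The image of the geodesic \<open>s\<close> is a quasi-geodesic, hence close to \<open>t\<close> by the Morse
  lemma.\<close>

lemma quasi_isometry_pullback_near_geodesic:
  assumes Y: "geodesic_pseudometric VY dY" and sl: "slim_triangles VY dY \<delta>"
    and f: "\<And>x. x \<in> VX \<Longrightarrow> f x \<in> VY" and lam: "1 \<le> lam" and c: "0 \<le> c"
    and qi: "\<And>a b. a \<in> VX \<Longrightarrow> b \<in> VX \<Longrightarrow>
      dY (f a) (f b) \<le> lam * dX a b + c \<and> dX a b \<le> lam * (dY (f a) (f b) + c)"
  shows "\<exists>H. \<forall>w s ns u v t nt j r. w \<in> VX \<longrightarrow> geodesic_seq VX dX s ns u v \<longrightarrow>
    geodesic_seq VY dY t nt (f u) (f v) \<longrightarrow> j \<le> nt \<longrightarrow> dY (f w) (t j) \<le> r \<longrightarrow>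
    (\<exists>j'\<le>ns. dX w (s j') \<le> lam * (r + H + c))"
proof -
  interpret Y: geodesic_pseudometric VY dY by (fact Y)
  obtain H where H: "\<forall>q N p n. quasi_geodesic_seq VY dY lam c q N \<longrightarrow>
      geodesic_seq VY dY p n (q 0) (q N) \<longrightarrow> (\<forall>i\<le>n. \<exists>j\<le>N. dY (p i) (q j) \<le> H)"
    using Y.geodesic_near_quasi_geodesic[OF sl lam c] by blast
  have "\<exists>j'\<le>ns. dX w (s j') \<le> lam * (r + H + c)"
    if w: "w \<in> VX" and s: "geodesic_seq VX dX s ns u v" and t: "geodesic_seq VY dY t nt (f u) (f v)"
      and j: "j \<le> nt" and close: "dY (f w) (t j) \<le> r" for w s ns u v t nt j r
  proof -
    have "geodesic_seq VY dY t nt (f (s 0)) (f (s ns))" using t geodesic_seqD(1,2)[OF s] by simp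
    then obtain j' where j': "j' \<le> ns" "dY (t j) (f (s j')) \<le> H"
      using H quasi_geodesic_seq_image[of VX dX s ns u v f VY dY lam c, OF s f qi] j by blast
    have sV: "s j' \<in> VX" using geodesic_seqD(3)[OF s j'(1)] .
    have "dY (f w) (f (s j')) \<le> dY (f w) (t j) + dY (t j) (f (s j'))"
      using Y.triangle[OF f[OF w] geodesic_seqD(3)[OF t j] f[OF sV]] .
    then have "lam * (dY (f w) (f (s j')) + c) \<le> lam * (r + H + c)"
      using close j'(2) lam by (intro mult_left_mono) auto
    then show ?thesis using qi[OF w sV] j'(1) by force
  qed
  then show ?thesis by blast
qed

theorem gromov_hyperbolic_quasi_isometry_invariant:
  assumes X: "geodesic_pseudometric VX dX" and Y: "geodesic_pseudometric VY dY"
    and hyp: "gromov_hyperbolic VY dY \<delta>" and f: "\<And>x. x \<in> VX \<Longrightarrow> f x \<in> VY"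
    and lam: "1 \<le> lam" and c: "0 \<le> c"
    and qi: "\<And>a b. a \<in> VX \<Longrightarrow> b \<in> VX \<Longrightarrow>
      dY (f a) (f b) \<le> lam * dX a b + c \<and> dX a b \<le> lam * (dY (f a) (f b) + c)"
  shows "\<exists>\<delta>'. gromov_hyperbolic VX dX \<delta>'"
proof -
  interpret X: geodesic_pseudometric VX dX by (fact X)
  interpret Y: geodesic_pseudometric VY dY by (fact Y)
  have slY: "slim_triangles VY dY (3 * \<delta> + 1)" using Y.gromov_hyperbolic_imp_slim[OF hyp] .
  obtain H where H: "\<forall>w s ns u v t nt j r. w \<in> VX \<longrightarrow> geodesic_seq VX dX s ns u v \<longrightarrow>
      geodesic_seq VY dY t nt (f u) (f v) \<longrightarrow> j \<le> nt \<longrightarrow> dY (f w) (t j) \<le> r \<longrightarrow>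
      (\<exists>j'\<le>ns. dX w (s j') \<le> lam * (r + H + c))"
    using quasi_isometry_pullback_near_geodesic[OF Y slY f lam c qi] by (rule exE)
  obtain H' where H': "\<forall>q N p n. quasi_geodesic_seq VY dY lam c q N \<longrightarrow>
      geodesic_seq VY dY p n (q 0) (q N) \<longrightarrow> (\<forall>j\<le>N. \<exists>i\<le>n. dY (q j) (p i) \<le> H')"
    using Y.quasi_geodesic_near_geodesic[OF slY lam c] by blast
  have "slim_triangles VX dX (lam * (H' + (3 * \<delta> + 1) + H + c))"
    unfolding slim_triangles_def
  proof (intro allI impI)
    fix p n x y a na z b nb i
    assume g: "geodesic_seq VX dX p n x y" and ga: "geodesic_seq VX dX a na x z"
      and gb: "geodesic_seq VX dX b nb z y" and i: "i \<le> n"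
    have V: "x \<in> VX" "y \<in> VX" "z \<in> VX" using geodesic_seq_ends[OF g] geodesic_seq_ends[OF ga] by auto
    have w: "p i \<in> VX" using geodesic_seqD(3)[OF g i] .
    obtain gp ngp where gp: "geodesic_seq VY dY gp ngp (f x) (f y)" using Y.geodesic_exists f V by blast
    obtain gpa nga where gpa: "geodesic_seq VY dY gpa nga (f x) (f z)" using Y.geodesic_exists f V by blast
    obtain gpb ngb where gpb: "geodesic_seq VY dY gpb ngb (f z) (f y)" using Y.geodesic_exists f V by blast
    have "geodesic_seq VY dY gp ngp (f (p 0)) (f (p n))" using gp geodesic_seqD(1,2)[OF g] by simp
    then obtain i' where i': "i' \<le> ngp" "dY (f (p i)) (gp i') \<le> H'"
      using H' quasi_geodesic_seq_image[of VX dX p n x y f VY dY lam c, OF g f qi] i by blast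
    have near: "dY (f (p i)) u \<le> H' + (3 * \<delta> + 1)" if "u \<in> VY" "dY (gp i') u \<le> 3 * \<delta> + 1" for u
      using Y.triangle[OF f[OF w] geodesic_seqD(3)[OF gp i'(1)] that(1)] i'(2) that(2) by linarith
    show "(\<exists>j\<le>na. dX (p i) (a j) \<le> lam * (H' + (3 * \<delta> + 1) + H + c)) \<or>
        (\<exists>j\<le>nb. dX (p i) (b j) \<le> lam * (H' + (3 * \<delta> + 1) + H + c))"
    proof (rule slim_trianglesD[OF slY gp gpa gpb i'(1)])
      fix j assume j: "j \<le> nga" "dY (gp i') (gpa j) \<le> 3 * \<delta> + 1"
      show ?thesis using H w ga gpa j(1) near[OF geodesic_seqD(3)[OF gpa j(1)] j(2)] by blast
    next
      fix j assume j: "j \<le> ngb" "dY (gp i') (gpb j) \<le> 3 * \<delta> + 1"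
      show ?thesis using H w gb gpb j(1) near[OF geodesic_seqD(3)[OF gpb j(1)] j(2)] by blast
    qed
  qed
  then show ?thesis using X.slim_imp_gromov_hyperbolic by blast
qed

lemma gromov_hyperbolic_quasi_inverse:
  assumes X: "geodesic_pseudometric VX dX" and Y: "geodesic_pseudometric VY dY"
    and F: "\<And>x. x \<in> VX \<Longrightarrow> F x \<in> VY" and R: "\<And>y. y \<in> VY \<Longrightarrow> R y \<in> VX"
    and L: "1 \<le> L" and C: "0 \<le> C"
    and F_lip: "\<And>a b. a \<in> VX \<Longrightarrow> b \<in> VX \<Longrightarrow> dY (F a) (F b) \<le> L * dX a b"
    and R_lip: "\<And>u v. u \<in> VY \<Longrightarrow> v \<in> VY \<Longrightarrow> dX (R u) (R v) \<le> L * dY u v"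
    and RF: "\<And>a. a \<in> VX \<Longrightarrow> dX a (R (F a)) \<le> C"
    and FR: "\<And>u. u \<in> VY \<Longrightarrow> dY u (F (R u)) \<le> C"
  shows "(\<exists>\<delta>. gromov_hyperbolic VX dX \<delta>) \<longleftrightarrow> (\<exists>\<delta>. gromov_hyperbolic VY dY \<delta>)"
proof -
  interpret X: geodesic_pseudometric VX dX by (fact X)
  interpret Y: geodesic_pseudometric VY dY by (fact Y)
  have back_and_forth: "dV a b \<le> L * (dW (f a) (f b) + 2 * C)"
    if "pseudometric V dV" "pseudometric W dW" "a \<in> V" "b \<in> V"
      and "\<And>x. x \<in> V \<Longrightarrow> f x \<in> W" "\<And>y. y \<in> W \<Longrightarrow> g y \<in> V"
      and "\<And>u v. u \<in> W \<Longrightarrow> v \<in> W \<Longrightarrow> dV (g u) (g v) \<le> L * dW u v"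
      and "\<And>a. a \<in> V \<Longrightarrow> dV a (g (f a)) \<le> C"
    for V dV W dW a b f g
  proof -
    interpret V: pseudometric V dV by fact
    have "dV a b \<le> dV a (g (f a)) + dV (g (f a)) (g (f b)) + dV (g (f b)) b"
      using V.triangle3 that by blast
    also have "\<dots> \<le> C + L * dW (f a) (f b) + C"
      using that V.commute[of "g (f b)" b] by (intro add_mono) auto
    also have "\<dots> \<le> L * (dW (f a) (f b) + 2 * C)"
      using mult_right_mono[OF L, of "2 * C"] C by (simp add: algebra_simps)
    finally show ?thesis .
  qed
  have F_qi: "dY (F a) (F b) \<le> L * dX a b + 2 * C \<and> dX a b \<le> L * (dY (F a) (F b) + 2 * C)"
    if "a \<in> VX" "b \<in> VX" for a b
    using F_lip[OF that] C back_and_forth[OF X.pseudometric_axioms Y.pseudometric_axioms that F R R_lip RF]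
    by simp
  have R_qi: "dX (R u) (R v) \<le> L * dY u v + 2 * C \<and> dY u v \<le> L * (dX (R u) (R v) + 2 * C)"
    if "u \<in> VY" "v \<in> VY" for u v
    using R_lip[OF that] C back_and_forth[OF Y.pseudometric_axioms X.pseudometric_axioms that R F F_lip FR]
    by simp
  show ?thesis
    using gromov_hyperbolic_quasi_isometry_invariant[OF X Y _ F L _ F_qi]
      gromov_hyperbolic_quasi_isometry_invariant[OF Y X _ R L _ R_qi] C by auto
qed

section \<open>Path metrics of weighted graphs\<close>

definition reverse_walk :: "('v \<times> 'v \<times> real) list \<Rightarrow> ('v \<times> 'v \<times> real) list" where
  "reverse_walk es = rev (map (\<lambda>(a, b, l). (b, a, l)) es)"

definition reachable :: "('v \<times> 'v \<times> real) set \<Rightarrow> 'v \<Rightarrow> 'v \<Rightarrow> bool" where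
  "reachable E u v \<longleftrightarrow> (\<exists>es. wchain E u es v)"

definition edges_in :: "'v set \<Rightarrow> ('v \<times> 'v \<times> real) set \<Rightarrow> bool" where
  "edges_in V E \<longleftrightarrow> (\<forall>a b l. (a, b, l) \<in> E \<longrightarrow> a \<in> V \<and> b \<in> V)"

definition nonneg_lengths :: "('v \<times> 'v \<times> real) set \<Rightarrow> bool" where
  "nonneg_lengths E \<longleftrightarrow> (\<forall>a b l. (a, b, l) \<in> E \<longrightarrow> 0 \<le> l)"

definition adjacent_or_eq :: "('v \<times> 'v \<times> real) set \<Rightarrow> real \<Rightarrow> 'v \<Rightarrow> 'v \<Rightarrow> bool" where
  "adjacent_or_eq E l u v \<longleftrightarrow> u = v \<or> (u, v, l) \<in> E \<or> (v, u, l) \<in> E"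

definition unit_lengths :: "('v \<times> 'v \<times> real) set \<Rightarrow> bool" where
  "unit_lengths E \<longleftrightarrow> (\<forall>a b l. (a, b, l) \<in> E \<longrightarrow> l = 1)"

lemma wchain_append: "wchain E u es1 v \<Longrightarrow> wchain E v es2 w \<Longrightarrow> wchain E u (es1 @ es2) w"
  by (induction es1 arbitrary: u) auto

lemma wchain_reverse: "wchain E u es v \<Longrightarrow> wchain E v (reverse_walk es) u"
proof (induction es arbitrary: u)
  case Nil
  then show ?case by (simp add: reverse_walk_def)
next
  case (Cons e es)
  obtain a b l where e: "e = (a, b, l)" by (cases e)
  then have "wchain E v (reverse_walk es @ [(b, a, l)]) a"
    using Cons by (intro wchain_append) auto
  then show ?case using Cons.prems e by (simp add: reverse_walk_def)
qed

lemma walk_length_Nil [simp]: "walk_length [] = 0"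
  by (simp add: walk_length_def)

lemma walk_length_Cons [simp]: "walk_length ((a, b, l) # es) = l + walk_length es"
  by (simp add: walk_length_def)

lemma walk_length_append: "walk_length (es1 @ es2) = walk_length es1 + walk_length es2"
  by (simp add: walk_length_def)

lemma walk_length_reverse: "walk_length (reverse_walk es) = walk_length es"
  by (induction es) (auto simp: reverse_walk_def walk_length_def)

lemma walk_length_nonneg: "nonneg_lengths E \<Longrightarrow> wchain E u es v \<Longrightarrow> 0 \<le> walk_length es"
  by (induction es arbitrary: u) (auto simp: nonneg_lengths_def)

lemma walk_length_unit: "unit_lengths E \<Longrightarrow> wchain E u es v \<Longrightarrow> walk_length es = real (length es)"
  by (induction es arbitrary: u) (auto simp: unit_lengths_def)

lemma wchain_in: "edges_in V E \<Longrightarrow> wchain E u es v \<Longrightarrow> u \<in> V \<Longrightarrow> v \<in> V"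
  by (induction es arbitrary: u) (auto simp: edges_in_def, blast+)

lemma gdist_le_walk_length:
  assumes "nonneg_lengths E" and "wchain E u es v"
  shows "gdist E u v \<le> walk_length es"
  unfolding gdist_def
proof (rule cInf_lower)
  show "bdd_below {walk_length es |es. wchain E u es v}"
    using walk_length_nonneg[OF assms(1)] by (intro bdd_belowI[of _ 0]) blast
qed (use assms(2) in blast)

lemma le_gdist:
  assumes "wchain E u es v" and "\<And>es. wchain E u es v \<Longrightarrow> L \<le> walk_length es"
  shows "L \<le> gdist E u v"
  unfolding gdist_def by (rule cInf_greatest) (use assms in blast)+

lemma adjacent_or_eq_walk:
  assumes "adjacent_or_eq E l u v" and "0 \<le> l"
  obtains es where "wchain E u es v" and "walk_length es \<le> l"
proof (cases "u = v")
  case True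
  then show thesis using that[of "[]"] assms(2) by simp
next
  case False
  then show thesis using that[of "[(u, v, l)]"] assms(1) unfolding adjacent_or_eq_def by simp
qed

lemma reachable_if_adjacent_or_eq: "adjacent_or_eq E l u v \<Longrightarrow> reachable E u v"
  unfolding adjacent_or_eq_def reachable_def by (metis wchain.simps)

lemma gdist_le_if_adjacent_or_eq:
  assumes "nonneg_lengths E" and "0 \<le> l" and "adjacent_or_eq E l u v"
  shows "gdist E u v \<le> l"
proof -
  obtain es where "wchain E u es v" "walk_length es \<le> l" by (rule adjacent_or_eq_walk[OF assms(3,2)])
  then show ?thesis using gdist_le_walk_length[OF assms(1)] by force
qed

lemma reachable_refl: "reachable E u u"
  unfolding reachable_def by (intro exI[of _ "[]"]) simp

lemma reachable_sym: "reachable E u v \<Longrightarrow> reachable E v u"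
  unfolding reachable_def by (meson wchain_reverse)

lemma reachable_trans: "reachable E u v \<Longrightarrow> reachable E v w \<Longrightarrow> reachable E u w"
  unfolding reachable_def by (meson wchain_append)

lemma reachable_edge: "(a, b, l) \<in> E \<Longrightarrow> reachable E a b"
  unfolding reachable_def by (intro exI[of _ "[(a, b, l)]"]) simp

lemma graph_connected_iff_reachable: "graph_connected V E \<longleftrightarrow> (\<forall>u\<in>V. \<forall>v\<in>V. reachable E u v)"
  unfolding graph_connected_def reachable_def by simp

lemma graph_connected_from_base:
  assumes "\<And>u. u \<in> V \<Longrightarrow> reachable E u v0"
  shows "graph_connected V E"
  unfolding graph_connected_iff_reachable
proof (intro ballI)
  fix u v assume "u \<in> V" "v \<in> V"
  then show "reachable E u v" using reachable_trans[OF assms reachable_sym[OF assms]] by blast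
qed

lemma reachable_image:
  assumes edge: "\<And>a b l. (a, b, l) \<in> E \<Longrightarrow> reachable E' (F a) (F b)"
  shows "wchain E u es v \<Longrightarrow> reachable E' (F u) (F v)"
proof (induction es arbitrary: u)
  case Nil
  then show ?case by (simp add: reachable_refl)
next
  case (Cons e es)
  obtain a b l where e: "e = (a, b, l)" by (cases e)
  have h: "(a, b, l) \<in> E \<or> (b, a, l) \<in> E" "a = u" "wchain E b es v" using Cons.prems e by auto
  from h(1) have "reachable E' (F a) (F b)"
    by (auto intro: edge reachable_sym[OF edge])
  then show ?case using reachable_trans[OF _ Cons.IH[OF h(3)]] h(2) by simp
qed

lemma gdist_pseudometric:
  assumes conn: "graph_connected V E" and nn: "nonneg_lengths E"
  shows "pseudometric V (gdist E)"
proof -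
  have walk: "\<exists>es. wchain E u es v" if "u \<in> V" "v \<in> V" for u v
    using conn that unfolding graph_connected_def by blast
  have le_rev: "gdist E v u \<le> gdist E u v" if uv: "u \<in> V" "v \<in> V" for u v
  proof -
    obtain es0 where "wchain E u es0 v" using walk[OF uv] by blast
    then show ?thesis
      by (rule le_gdist) (metis gdist_le_walk_length[OF nn] walk_length_reverse wchain_reverse)
  qed
  have nonneg: "0 \<le> gdist E u v" if uv: "u \<in> V" "v \<in> V" for u v
  proof -
    obtain es0 where "wchain E u es0 v" using walk[OF uv] by blast
    then show ?thesis by (rule le_gdist) (rule walk_length_nonneg[OF nn])
  qed
  have zero: "gdist E u u = 0" if "u \<in> V" for u
    using gdist_le_walk_length[OF nn, of u "[]" u] nonneg[OF that that] by simp
  have triangle: "gdist E u w \<le> gdist E u v + gdist E v w" if uvw: "u \<in> V" "v \<in> V" "w \<in> V"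
    for u v w
  proof -
    obtain es1 where es1: "wchain E u es1 v" using walk uvw by blast
    obtain es2 where es2: "wchain E v es2 w" using walk uvw by blast
    have "gdist E u w - walk_length b \<le> gdist E u v" if b: "wchain E v b w" for b
      using es1
    proof (rule le_gdist)
      fix a assume "wchain E u a v"
      then show "gdist E u w - walk_length b \<le> walk_length a"
        using gdist_le_walk_length[OF nn wchain_append[OF _ b]] walk_length_append[of a b] by force
    qed
    then have "gdist E u w - gdist E u v \<le> gdist E v w"
      by (intro le_gdist[OF es2]) (simp add: algebra_simps)
    then show ?thesis by simp
  qed
  show ?thesis
    by unfold_locales (use nonneg le_rev zero triangle in \<open>auto intro: order_antisym\<close>)
qed

lemma gdist_lipschitz:
  assumes m: "pseudometric V' d'" and ein: "edges_in V E" and FV: "\<And>x. x \<in> V \<Longrightarrow> F x \<in> V'"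
    and edge: "\<And>a b l. (a, b, l) \<in> E \<Longrightarrow> d' (F a) (F b) \<le> L * l" and L: "0 < L"
    and conn: "graph_connected V E" and uv: "u \<in> V" "v \<in> V"
  shows "d' (F u) (F v) \<le> L * gdist E u v"
proof -
  interpret pseudometric V' d' by (fact m)
  have walk: "d' (F u) (F w) \<le> L * walk_length es" if "wchain E u es w" "u \<in> V" for u es w
    using that
  proof (induction es arbitrary: u)
    case Nil
    then show ?case using FV by simp
  next
    case (Cons e es)
    obtain a b l where e: "e = (a, b, l)" by (cases e)
    have h: "(a, b, l) \<in> E \<or> (b, a, l) \<in> E" "a = u" "wchain E b es w" using Cons.prems e by auto
    have bV: "b \<in> V" using h(1) ein unfolding edges_in_def by auto
    have "d' (F u) (F b) \<le> L * l"
      using edge h(1,2) commute FV bV Cons.prems(2) by (metis (no_types, lifting))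
    moreover have "d' (F u) (F w) \<le> d' (F u) (F b) + d' (F b) (F w)"
      using triangle FV Cons.prems(2) bV wchain_in[OF ein h(3) bV] by blast
    ultimately show ?case using Cons.IH[OF h(3) bV] e by (simp add: algebra_simps)
  qed
  obtain es0 where "wchain E u es0 v" using conn uv unfolding graph_connected_def by blast
  then have "d' (F u) (F v) / L \<le> gdist E u v"
    by (rule le_gdist) (use walk uv L in \<open>simp add: divide_le_eq mult.commute\<close>)
  then show ?thesis using L by (simp add: divide_le_eq mult.commute)
qed

fun walk_vertex :: "'v \<Rightarrow> ('v \<times> 'v \<times> real) list \<Rightarrow> nat \<Rightarrow> 'v" where
  "walk_vertex u [] i = u"
| "walk_vertex u (e # es) 0 = u"
| "walk_vertex u (e # es) (Suc i) = walk_vertex (fst (snd e)) es i"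

lemma walk_vertex_0 [simp]: "walk_vertex u es 0 = u"
  by (cases es) auto

lemma wchain_split:
  "wchain E u es v \<Longrightarrow> i \<le> length es \<Longrightarrow>
     wchain E u (take i es) (walk_vertex u es i) \<and> wchain E (walk_vertex u es i) (drop i es) v"
proof (induction es arbitrary: u i)
  case (Cons e es)
  then show ?case by (cases e; cases i) auto
qed simp

lemma walk_vertex_drop:
  "i \<le> length es \<Longrightarrow> walk_vertex (walk_vertex u es i) (drop i es) k = walk_vertex u es (i + k)"
proof (induction es arbitrary: u i)
  case (Cons e es)
  then show ?case by (cases i) auto
qed simp

lemma (in pseudometric) geodesic_seqI:
  assumes "p 0 = x" "p n = y" "\<And>i. i \<le> n \<Longrightarrow> p i \<in> V"
    and "\<And>i j. i \<le> j \<Longrightarrow> j \<le> n \<Longrightarrow> d (p i) (p j) = real j - real i"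
  shows "geodesic_seq V d p n x y"
  unfolding geodesic_seq_def
proof (intro conjI allI impI)
  fix i j assume ij: "i \<le> n" "j \<le> n"
  show "d (p i) (p j) = \<bar>real i - real j\<bar>"
  proof (cases "i \<le> j")
    case False
    then show ?thesis using assms(4)[of j i] ij commute[OF assms(3) assms(3)] by simp
  qed (use assms(4) ij in simp)
qed (use assms in auto)

lemma shortest_walk_geodesic:
  assumes conn: "graph_connected V E" and ein: "edges_in V E" and unit: "unit_lengths E"
    and es: "wchain E u es v" and shortest: "\<And>es'. wchain E u es' v \<Longrightarrow> length es \<le> length es'"
    and u: "u \<in> V"
  shows "geodesic_seq V (gdist E) (walk_vertex u es) (length es) u v"
proof -
  have nn: "nonneg_lengths E" using unit unfolding unit_lengths_def nonneg_lengths_def by force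
  interpret pseudometric V "gdist E" using gdist_pseudometric[OF conn nn] .
  have dlen: "gdist E x y \<le> real (length es)" if "wchain E x es y" for x y es
    using gdist_le_walk_length[OF nn that] walk_length_unit[OF unit that] by simp
  define n where "n = length es"
  define p where "p = walk_vertex u es"
  have duv: "gdist E u v = real n"
  proof (rule antisym)
    show "gdist E u v \<le> real n" using dlen[OF es] n_def by simp
    show "real n \<le> gdist E u v"
      by (rule le_gdist[OF es]) (use shortest walk_length_unit[OF unit] n_def in force)
  qed
  have split: "wchain E u (take i es) (p i)" "wchain E (p i) (drop i es) v" if "i \<le> n" for i
    using wchain_split[OF es] that unfolding p_def n_def by blast+
  have pV: "p i \<in> V" if "i \<le> n" for i using split[OF that] wchain_in[OF ein _ u] by blast
  have v: "v \<in> V" using wchain_in[OF ein es u] .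
  show ?thesis
    unfolding p_def[symmetric] n_def[symmetric]
  proof (rule geodesic_seqI)
    show "p 0 = u" unfolding p_def by simp
    show "p n = v" using split(2)[of n] unfolding n_def by simp
    fix i j assume ij: "i \<le> j" "j \<le> n"
    have "j - i \<le> length (drop i es)" using ij n_def by simp
    from wchain_split[OF split(2) this] ij
    have "wchain E (p i) (take (j - i) (drop i es)) (p j)"
      unfolding p_def using walk_vertex_drop[of i es u "j - i"] n_def by simp
    then have "gdist E (p i) (p j) \<le> real j - real i" using dlen ij n_def by fastforce
    moreover have "gdist E u (p i) \<le> real i" "gdist E (p j) v \<le> real n - real j"
      using dlen[OF split(1)] dlen[OF split(2)] ij n_def by simp_all
    moreover have "gdist E u v \<le> gdist E u (p i) + gdist E (p i) (p j) + gdist E (p j) v"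
      using triangle3 u v pV ij by simp
    ultimately show "gdist E (p i) (p j) = real j - real i" using duv by linarith
  qed (use pV in simp)
qed

lemma unit_graph_geodesic:
  assumes conn: "graph_connected V E" and ein: "edges_in V E" and unit: "unit_lengths E"
  shows "geodesic_pseudometric V (gdist E)"
proof -
  have nn: "nonneg_lengths E" using unit unfolding unit_lengths_def nonneg_lengths_def by force
  interpret pseudometric V "gdist E" using gdist_pseudometric[OF conn nn] .
  show ?thesis
  proof
    fix u v assume uv: "u \<in> V" "v \<in> V"
    obtain es0 where "wchain E u es0 v" using conn uv unfolding graph_connected_def by blast
    then obtain es where "wchain E u es v" "\<And>es'. wchain E u es' v \<Longrightarrow> length es \<le> length es'"
      using ex_has_least_nat[of "\<lambda>es. wchain E u es v" es0 length] by blast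
    then show "\<exists>p n. geodesic_seq V (gdist E) p n u v"
      using shortest_walk_geodesic[OF conn ein unit _ _ uv(1)] by blast
  qed
qed

section \<open>The three graphs of a relative generating set\<close>

locale relative_generating_set = group G for G (structure) +
  fixes H :: "nat \<Rightarrow> 'a set" and m :: nat and S :: "'a set"
  assumes m_pos: "1 \<le> m"
    and subgroups: "\<And>i. i \<in> {1..m} \<Longrightarrow> subgroup (H i) G"
    and S_carrier: "S \<subseteq> carrier G"
    and generate_rel: "generate G (S \<union> (\<Union>i\<in>{1..m}. H i)) = carrier G"
begin

abbreviation "gens \<equiv> S \<union> (\<Union>i\<in>{1..m}. H i)"
abbreviation "E_rel \<equiv> rel_cayley_edges G S H m"
abbreviation "V_cos \<equiv> coset_vertices G H m"
abbreviation "E_cos \<equiv> coset_edges G S H m"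
abbreviation "V_cone \<equiv> coned_vertices G H m"
abbreviation "E_cone \<equiv> coned_edges G S H m"

lemma H_carrier: "i \<in> {1..m} \<Longrightarrow> H i \<subseteq> carrier G"
  using subgroups subgroup.subset by blast

lemma gens_carrier: "gens \<subseteq> carrier G"
  using S_carrier H_carrier by blast

lemma coset_self: "i \<in> {1..m} \<Longrightarrow> g \<in> carrier G \<Longrightarrow> g \<in> g <# H i"
  unfolding l_coset_def using subgroups subgroup.one_closed by force

lemma coset_carrier: "i \<in> {1..m} \<Longrightarrow> g \<in> carrier G \<Longrightarrow> a \<in> g <# H i \<Longrightarrow> a \<in> carrier G"
  using l_coset_carrier subgroups by blast

lemma coset_eq: "i \<in> {1..m} \<Longrightarrow> g \<in> carrier G \<Longrightarrow> a \<in> g <# H i \<Longrightarrow> a <# H i = g <# H i"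
  using l_repr_independence[OF _ _ subgroups] by simp

lemma coset_mult: "i \<in> {1..m} \<Longrightarrow> g \<in> carrier G \<Longrightarrow> h \<in> H i \<Longrightarrow> (g \<otimes> h) <# H i = g <# H i"
  by (rule coset_eq) (auto simp: l_coset_def)

lemma rel_edge_iff: "(a, b, l) \<in> E_rel \<longleftrightarrow> a \<in> carrier G \<and> l = 1 \<and> (\<exists>s\<in>gens. b = a \<otimes> s)"
  unfolding rel_cayley_edges_def by auto

lemma rel_edgeI: "a \<in> carrier G \<Longrightarrow> s \<in> gens \<Longrightarrow> (a, a \<otimes> s, 1) \<in> E_rel"
  unfolding rel_edge_iff by blast

lemma rel_edges_in: "edges_in (carrier G) E_rel"
  unfolding edges_in_def rel_edge_iff using gens_carrier by blast

lemma rel_unit_lengths: "unit_lengths E_rel"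
  unfolding unit_lengths_def rel_edge_iff by blast

lemma rel_nonneg_lengths: "nonneg_lengths E_rel"
  unfolding nonneg_lengths_def rel_edge_iff by simp

lemma reachable_rel_left_mult:
  assumes "h \<in> carrier G" and "reachable E_rel a b"
  shows "reachable E_rel (h \<otimes> a) (h \<otimes> b)"
proof -
  have edge: "reachable E_rel (h \<otimes> x) (h \<otimes> y)" if xy: "(x, y, l) \<in> E_rel" for x y l
  proof -
    obtain s where s: "x \<in> carrier G" "s \<in> gens" "y = x \<otimes> s" using xy rel_edge_iff by blast
    then have "(h \<otimes> x, h \<otimes> y, 1) \<in> E_rel"
      using rel_edgeI[of "h \<otimes> x" s] assms(1) gens_carrier by (auto simp: m_assoc)
    then show ?thesis by (rule reachable_edge)
  qed
  obtain es where "wchain E_rel a es b" using assms(2) unfolding reachable_def by blast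
  then show ?thesis by (rule reachable_image[where F="\<lambda>x. h \<otimes> x", rotated]) (rule edge)
qed

lemma reachable_rel_one: "g \<in> generate G gens \<Longrightarrow> reachable E_rel \<one> g"
proof (induction rule: generate.induct)
  case one
  then show ?case by (rule reachable_refl)
next
  case (incl h)
  then have "h \<in> carrier G" using gens_carrier by blast
  moreover have "(\<one>, \<one> \<otimes> h, 1) \<in> E_rel" using incl by (intro rel_edgeI) auto
  ultimately have "(\<one>, h, 1) \<in> E_rel" by simp
  then show ?case by (rule reachable_edge)
next
  case (inv h)
  then have "h \<in> carrier G" using gens_carrier by blast
  moreover have "(inv h, inv h \<otimes> h, 1) \<in> E_rel" using inv \<open>h \<in> carrier G\<close> by (intro rel_edgeI) auto
  ultimately have "(inv h, \<one>, 1) \<in> E_rel" by simp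
  then show ?case by (rule reachable_sym[OF reachable_edge])
next
  case (eng h1 h2)
  have "h1 \<in> carrier G" using eng(1) generate_rel by simp
  then have "reachable E_rel (h1 \<otimes> \<one>) (h1 \<otimes> h2)" using eng.IH(2) by (rule reachable_rel_left_mult)
  then show ?case using reachable_trans[OF eng.IH(1)] \<open>h1 \<in> carrier G\<close> by simp
qed

lemma rel_connected: "graph_connected (carrier G) E_rel"
proof (rule graph_connected_from_base)
  fix u assume "u \<in> carrier G"
  then show "reachable E_rel u \<one>" using reachable_sym[OF reachable_rel_one] generate_rel by simp
qed

lemma rel_geodesic: "geodesic_pseudometric (carrier G) (gdist E_rel)"
  using unit_graph_geodesic[OF rel_connected rel_edges_in rel_unit_lengths] .

interpretation R: geodesic_pseudometric "carrier G" "gdist E_rel"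
  by (fact rel_geodesic)

lemma rel_dist_coset:
  assumes i: "i \<in> {1..m}" and g: "g \<in> carrier G" and a: "a \<in> g <# H i" and b: "b \<in> g <# H i"
  shows "gdist E_rel a b \<le> 1"
proof -
  obtain h1 h2 where h: "h1 \<in> H i" "h2 \<in> H i" "a = g \<otimes> h1" "b = g \<otimes> h2"
    using a b unfolding l_coset_def by blast
  have hc: "h1 \<in> carrier G" "h2 \<in> carrier G" using h H_carrier[OF i] by auto
  have "inv h1 \<otimes> h2 \<in> H i" using subgroups[OF i] h subgroup.m_closed subgroup.m_inv_closed by metis
  then have "inv h1 \<otimes> h2 \<in> gens" using i by blast
  moreover have "h1 \<otimes> (inv h1 \<otimes> h2) = h2" using hc by (simp add: m_assoc[symmetric])
  then have "a \<otimes> (inv h1 \<otimes> h2) = b" using h hc g by (simp add: m_assoc)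
  ultimately have "(a, b, 1) \<in> E_rel" using rel_edgeI[of a "inv h1 \<otimes> h2"] h hc g by simp
  then show ?thesis
    by (intro gdist_le_if_adjacent_or_eq[OF rel_nonneg_lengths]) (auto simp: adjacent_or_eq_def)
qed

lemma rel_dist_step:
  assumes a: "a \<in> carrier G" and x: "x \<in> S \<union> m_inv G ` S \<union> {\<one>}"
  shows "gdist E_rel a (a \<otimes> x) \<le> 1"
proof -
  consider "x \<in> S" | s where "s \<in> S" "x = inv s" | "x = \<one>" using x by blast
  then have "adjacent_or_eq E_rel 1 a (a \<otimes> x)"
  proof cases
    case 1
    then show ?thesis using rel_edgeI[OF a] unfolding adjacent_or_eq_def by blast
  next
    case 2
    then have s: "s \<in> carrier G" "s \<in> gens" using S_carrier by auto
    then have "a \<otimes> x \<in> carrier G" "(a \<otimes> x) \<otimes> s = a" using 2 a by (simp_all add: m_assoc)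
    then have "(a \<otimes> x, a, 1) \<in> E_rel" using rel_edgeI[OF _ s(2)] by metis
    then show ?thesis unfolding adjacent_or_eq_def by blast
  next
    case 3
    then show ?thesis using a unfolding adjacent_or_eq_def by simp
  qed
  then show ?thesis by (intro gdist_le_if_adjacent_or_eq[OF rel_nonneg_lengths]) simp
qed

lemma cos_vertex_iff: "u \<in> V_cos \<longleftrightarrow> (\<exists>i g. u = (i, g <# H i) \<and> i \<in> {1..m} \<and> g \<in> carrier G)"
  unfolding coset_vertices_def by blast

lemma cos_edge_iff: "(u, v, l) \<in> E_cos \<longleftrightarrow> l = 1 \<and> u \<in> V_cos \<and> v \<in> V_cos \<and> u \<noteq> v \<and>
    (\<exists>a\<in>snd u. \<exists>b\<in>snd v. \<exists>x\<in>S \<union> m_inv G ` S \<union> {\<one>}. b = a \<otimes> x)"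
  unfolding coset_edges_def by blast

lemma cos_edges_in: "edges_in V_cos E_cos"
  unfolding edges_in_def cos_edge_iff by blast

lemma cos_unit_lengths: "unit_lengths E_cos"
  unfolding unit_lengths_def cos_edge_iff by blast

lemma cos_nonneg_lengths: "nonneg_lengths E_cos"
  unfolding nonneg_lengths_def cos_edge_iff by simp

lemma cos_adjacent:
  assumes "u \<in> V_cos" "v \<in> V_cos" "a \<in> snd u" "b \<in> snd v" "x \<in> S \<union> m_inv G ` S \<union> {\<one>}" "b = a \<otimes> x"
  shows "adjacent_or_eq E_cos 1 u v"
  unfolding adjacent_or_eq_def cos_edge_iff using assms by blast

lemma cos_adjacent_common:
  "u \<in> V_cos \<Longrightarrow> v \<in> V_cos \<Longrightarrow> a \<in> snd u \<Longrightarrow> a \<in> snd v \<Longrightarrow> a \<in> carrier G \<Longrightarrow> adjacent_or_eq E_cos 1 u v"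
  by (rule cos_adjacent[of u v a a \<one>]) auto

definition coset_of :: "'a \<Rightarrow> nat \<times> 'a set" where
  "coset_of g = (1, g <# H 1)"

definition coset_rep :: "nat \<times> 'a set \<Rightarrow> 'a" where
  "coset_rep u = (SOME a. a \<in> snd u)"

lemma one_index: "1 \<in> {1..m}"
  using m_pos by simp

lemma coset_of_vertex: "g \<in> carrier G \<Longrightarrow> coset_of g \<in> V_cos"
  unfolding coset_of_def cos_vertex_iff using one_index by blast

lemma coset_of_self: "g \<in> carrier G \<Longrightarrow> g \<in> snd (coset_of g)"
  unfolding coset_of_def using coset_self[OF one_index] by simp

lemma coset_rep_mem:
  assumes "u \<in> V_cos" shows "coset_rep u \<in> snd u" and "coset_rep u \<in> carrier G"
proof -
  obtain i g where u: "u = (i, g <# H i)" "i \<in> {1..m}" "g \<in> carrier G"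
    using assms cos_vertex_iff by blast
  then have "g \<in> snd u" using coset_self by simp
  then show rep: "coset_rep u \<in> snd u" unfolding coset_rep_def by (rule someI)
  show "coset_rep u \<in> carrier G" using coset_carrier[OF u(2,3)] rep u(1) by simp
qed

text \<open>A generator step \<open>a \<mapsto> a s\<close> with \<open>s \<in> H\<^sub>j\<close> is realised in the coset graph by passing
  through the coset \<open>a H\<^sub>j\<close>, which contains both \<open>a\<close> and \<open>a s\<close>.\<close>

lemma coset_of_gen_step:
  assumes a: "a \<in> carrier G" and s: "s \<in> gens"
  obtains w where "w \<in> V_cos" "adjacent_or_eq E_cos 1 (coset_of a) w"
    "adjacent_or_eq E_cos 1 w (coset_of (a \<otimes> s))"
proof -
  have as: "a \<otimes> s \<in> carrier G" using a s gens_carrier by blast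
  show thesis
  proof (cases "s \<in> S")
    case True
    have "adjacent_or_eq E_cos 1 (coset_of a) (coset_of (a \<otimes> s))"
      by (rule cos_adjacent[OF coset_of_vertex[OF a] coset_of_vertex[OF as] coset_of_self[OF a]
            coset_of_self[OF as]]) (use True in auto)
    moreover have "adjacent_or_eq E_cos 1 (coset_of (a \<otimes> s)) (coset_of (a \<otimes> s))"
      by (simp add: adjacent_or_eq_def)
    ultimately show thesis using that[OF coset_of_vertex[OF as]] by blast
  next
    case False
    then obtain j where j: "j \<in> {1..m}" "s \<in> H j" using s by blast
    have w: "(j, a <# H j) \<in> V_cos" using j a cos_vertex_iff by blast
    have "a \<otimes> s \<in> a <# H j" unfolding l_coset_def using j by blast
    have "adjacent_or_eq E_cos 1 (coset_of a) (j, a <# H j)"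
      by (rule cos_adjacent_common[OF coset_of_vertex[OF a] w coset_of_self[OF a] _ a])
        (simp add: coset_self[OF j(1) a])
    moreover have "adjacent_or_eq E_cos 1 (j, a <# H j) (coset_of (a \<otimes> s))"
      by (rule cos_adjacent_common[OF w coset_of_vertex[OF as] _ coset_of_self[OF as] as])
        (simp add: \<open>a \<otimes> s \<in> a <# H j\<close>)
    ultimately show thesis using that[OF w] by blast
  qed
qed

lemma cos_connected: "graph_connected V_cos E_cos"
proof (rule graph_connected_from_base)
  have edge: "reachable E_cos (coset_of a) (coset_of b)" if ab: "(a, b, l) \<in> E_rel" for a b l
  proof -
    obtain s where s: "a \<in> carrier G" "s \<in> gens" "b = a \<otimes> s" using ab rel_edge_iff by blast
    obtain w where "w \<in> V_cos" and w: "adjacent_or_eq E_cos 1 (coset_of a) w"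
      "adjacent_or_eq E_cos 1 w (coset_of (a \<otimes> s))"
      by (rule coset_of_gen_step[OF s(1,2)])
    have "reachable E_cos (coset_of a) (coset_of (a \<otimes> s))"
      using reachable_trans[OF reachable_if_adjacent_or_eq[OF w(1)] reachable_if_adjacent_or_eq[OF w(2)]] .
    then show ?thesis using s(3) by simp
  qed
  fix u assume u: "u \<in> V_cos"
  then obtain i g where ig: "u = (i, g <# H i)" "i \<in> {1..m}" "g \<in> carrier G"
    using cos_vertex_iff by blast
  have "reachable E_cos u (coset_of g)"
    by (rule reachable_if_adjacent_or_eq[OF cos_adjacent_common[OF u coset_of_vertex[OF ig(3)]]])
      (use ig coset_self coset_of_self in auto)
  moreover obtain es where "wchain E_rel g es \<one>"
    using rel_connected ig(3) unfolding graph_connected_def by blast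
  then have "reachable E_cos (coset_of g) (coset_of \<one>)"
    by (rule reachable_image[where F=coset_of, rotated]) (rule edge)
  ultimately show "reachable E_cos u (coset_of \<one>)" by (rule reachable_trans)
qed

lemma cos_geodesic: "geodesic_pseudometric V_cos (gdist E_cos)"
  using unit_graph_geodesic[OF cos_connected cos_edges_in cos_unit_lengths] .

interpretation C: geodesic_pseudometric V_cos "gdist E_cos"
  by (fact cos_geodesic)

lemma cos_dist_coset_of_gen:
  assumes "a \<in> carrier G" "s \<in> gens"
  shows "gdist E_cos (coset_of a) (coset_of (a \<otimes> s)) \<le> 2"
proof -
  obtain w where w: "w \<in> V_cos" "adjacent_or_eq E_cos 1 (coset_of a) w"
    "adjacent_or_eq E_cos 1 w (coset_of (a \<otimes> s))"
    by (rule coset_of_gen_step[OF assms])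
  have "a \<otimes> s \<in> carrier G" using assms gens_carrier by blast
  then have "gdist E_cos (coset_of a) (coset_of (a \<otimes> s))
      \<le> gdist E_cos (coset_of a) w + gdist E_cos w (coset_of (a \<otimes> s))"
    using C.triangle coset_of_vertex assms(1) w(1) by blast
  then show ?thesis
    using gdist_le_if_adjacent_or_eq[OF cos_nonneg_lengths _ w(2)]
      gdist_le_if_adjacent_or_eq[OF cos_nonneg_lengths _ w(3)] by simp
qed

lemma coset_of_lipschitz:
  assumes "a \<in> carrier G" "b \<in> carrier G"
  shows "gdist E_cos (coset_of a) (coset_of b) \<le> 2 * gdist E_rel a b"
proof (rule gdist_lipschitz[OF C.pseudometric_axioms rel_edges_in coset_of_vertex _ _ rel_connected assms])
  fix x y l assume "(x, y, l) \<in> E_rel"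
  then obtain s where "x \<in> carrier G" "s \<in> gens" "y = x \<otimes> s" "l = 1" unfolding rel_edge_iff by blast
  then show "gdist E_cos (coset_of x) (coset_of y) \<le> 2 * l" using cos_dist_coset_of_gen by simp
next
  show "(0::real) < 2" by simp
qed

lemma coset_rep_lipschitz:
  assumes "u \<in> V_cos" "v \<in> V_cos"
  shows "gdist E_rel (coset_rep u) (coset_rep v) \<le> 3 * gdist E_cos u v"
proof (rule gdist_lipschitz[OF R.pseudometric_axioms cos_edges_in coset_rep_mem(2) _ _ cos_connected assms])
  fix u v l assume "(u, v, l) \<in> E_cos"
  then obtain a b x where uv: "l = 1" "u \<in> V_cos" "v \<in> V_cos" "a \<in> snd u" "b \<in> snd v"
    "x \<in> S \<union> m_inv G ` S \<union> {\<one>}" "b = a \<otimes> x"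
    unfolding cos_edge_iff by blast
  obtain i g where i: "u = (i, g <# H i)" "i \<in> {1..m}" "g \<in> carrier G" using uv(2) cos_vertex_iff by blast
  obtain j h where j: "v = (j, h <# H j)" "j \<in> {1..m}" "h \<in> carrier G" using uv(3) cos_vertex_iff by blast
  have a: "a \<in> carrier G" using coset_carrier[OF i(2,3)] uv(4) i(1) by simp
  have b: "b \<in> carrier G" using coset_carrier[OF j(2,3)] uv(5) j(1) by simp
  have "gdist E_rel (coset_rep u) (coset_rep v)
      \<le> gdist E_rel (coset_rep u) a + gdist E_rel a b + gdist E_rel b (coset_rep v)"
    using R.triangle3[OF coset_rep_mem(2)[OF uv(2)] a b coset_rep_mem(2)[OF uv(3)]] .
  moreover have "gdist E_rel (coset_rep u) a \<le> 1"
    using rel_dist_coset[OF i(2,3)] coset_rep_mem(1)[OF uv(2)] uv(4) i(1) by simp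
  moreover have "gdist E_rel a b \<le> 1" using rel_dist_step[OF a uv(6)] uv(7) by simp
  moreover have "gdist E_rel b (coset_rep v) \<le> 1"
    using rel_dist_coset[OF j(2,3)] coset_rep_mem(1)[OF uv(3)] uv(5) j(1) by simp
  ultimately show "gdist E_rel (coset_rep u) (coset_rep v) \<le> 3 * l" using uv(1) by linarith
next
  show "(0::real) < 3" by simp
qed

lemma coset_rep_coset_of: "g \<in> carrier G \<Longrightarrow> gdist E_rel g (coset_rep (coset_of g)) \<le> 1"
  using rel_dist_coset[OF one_index] coset_rep_mem(1)[OF coset_of_vertex] coset_of_self
  unfolding coset_of_def by auto

lemma coset_of_coset_rep:
  assumes "u \<in> V_cos" shows "gdist E_cos u (coset_of (coset_rep u)) \<le> 1"
proof -
  have "coset_rep u \<in> carrier G" "coset_rep u \<in> snd u" using coset_rep_mem[OF assms] by auto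
  then have "adjacent_or_eq E_cos 1 u (coset_of (coset_rep u))"
    using cos_adjacent_common[OF assms coset_of_vertex] coset_of_self by blast
  then show ?thesis by (rule gdist_le_if_adjacent_or_eq[OF cos_nonneg_lengths, rotated]) simp
qed

theorem rel_hyperbolic_iff_coset_hyperbolic:
  "(\<exists>\<delta>. gromov_hyperbolic (carrier G) (gdist E_rel) \<delta>) \<longleftrightarrow> (\<exists>\<delta>. gromov_hyperbolic V_cos (gdist E_cos) \<delta>)"
proof (rule gromov_hyperbolic_quasi_inverse[OF rel_geodesic cos_geodesic,
      where F=coset_of and R=coset_rep and L=3 and C=1])
  show "gdist E_cos (coset_of a) (coset_of b) \<le> 3 * gdist E_rel a b"
    if "a \<in> carrier G" "b \<in> carrier G" for a b
    using coset_of_lipschitz[OF that] R.nonneg[OF that] by linarith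
qed (simp_all add: coset_of_vertex coset_rep_mem(2) coset_rep_lipschitz coset_rep_coset_of
    coset_of_coset_rep)

lemma cone_vertex_iff: "x \<in> V_cone \<longleftrightarrow> (\<exists>a\<in>carrier G. x = Inl a) \<or> (\<exists>u\<in>V_cos. x = Inr u)"
  unfolding coned_vertices_def by blast

lemma cone_edge_iff: "(x, y, l) \<in> E_cone \<longleftrightarrow>
   (\<exists>g s. x = Inl g \<and> y = Inl (g \<otimes> s) \<and> l = 1 \<and> g \<in> carrier G \<and> s \<in> S) \<or>
   (\<exists>g i. x = Inl g \<and> y = Inr (i, g <# H i) \<and> l = 1 / 2 \<and> g \<in> carrier G \<and> i \<in> {1..m})"
  unfolding coned_edges_def by blast

lemma cone_edgeI: "g \<in> carrier G \<Longrightarrow> i \<in> {1..m} \<Longrightarrow> (Inl g, Inr (i, g <# H i), 1 / 2) \<in> E_cone"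
  unfolding cone_edge_iff by blast

lemma cone_nonneg_lengths: "nonneg_lengths E_cone"
  unfolding nonneg_lengths_def cone_edge_iff by auto

lemma cone_edges_in: "edges_in V_cone E_cone"
  unfolding edges_in_def
proof (intro allI impI)
  fix x y l assume "(x, y, l) \<in> E_cone"
  then show "x \<in> V_cone \<and> y \<in> V_cone"
    unfolding cone_edge_iff
  proof (elim disjE exE conjE)
    fix g s assume "x = Inl g" "y = Inl (g \<otimes> s)" "g \<in> carrier G" "s \<in> S"
    then show ?thesis using S_carrier unfolding cone_vertex_iff by auto
  next
    fix g i assume "x = Inl g" "y = Inr (i, g <# H i)" "g \<in> carrier G" "i \<in> {1..m}"
    moreover from this have "(i, g <# H i) \<in> V_cos" using cos_vertex_iff by blast
    ultimately show ?thesis unfolding cone_vertex_iff by auto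
  qed
qed

text \<open>A generator \<open>s \<in> H\<^sub>j\<close> is crossed by two half edges through the cone point of \<open>a H\<^sub>j\<close>.\<close>

lemma cone_gen_step:
  assumes a: "a \<in> carrier G" and s: "s \<in> gens"
  obtains w l1 l2 where "w \<in> V_cone" "0 \<le> l1" "0 \<le> l2" "l1 + l2 \<le> 1"
    "adjacent_or_eq E_cone l1 (Inl a) w" "adjacent_or_eq E_cone l2 w (Inl (a \<otimes> s))"
proof (cases "s \<in> S")
  case True
  have "(Inl a, Inl (a \<otimes> s), 1) \<in> E_cone" using a True unfolding cone_edge_iff by blast
  moreover have "Inl (a \<otimes> s) \<in> V_cone" using a True S_carrier cone_vertex_iff by blast
  ultimately show thesis using that[of "Inl (a \<otimes> s)" 1 0] by (simp add: adjacent_or_eq_def)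
next
  case False
  then obtain j where j: "j \<in> {1..m}" "s \<in> H j" using s by blast
  have as: "a \<otimes> s \<in> carrier G" using a s gens_carrier by blast
  have "(Inl (a \<otimes> s), Inr (j, a <# H j), 1 / 2) \<in> E_cone"
    using cone_edgeI[OF as j(1)] coset_mult[OF j(1) a j(2)] by simp
  moreover have "(Inl a, Inr (j, a <# H j), 1 / 2) \<in> E_cone" using cone_edgeI[OF a j(1)] .
  moreover have "Inr (j, a <# H j) \<in> V_cone" using a j cone_vertex_iff cos_vertex_iff by blast
  ultimately show thesis using that[of "Inr (j, a <# H j)" "1 / 2" "1 / 2"] by (simp add: adjacent_or_eq_def)
qed

lemma cone_connected: "graph_connected V_cone E_cone"
proof (rule graph_connected_from_base)
  have edge: "reachable E_cone (Inl a) (Inl b)" if ab: "(a, b, l) \<in> E_rel" for a b l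
  proof -
    obtain s where s: "a \<in> carrier G" "s \<in> gens" "b = a \<otimes> s" using ab rel_edge_iff by blast
    obtain w l1 l2 where "w \<in> V_cone" "0 \<le> l1" "0 \<le> l2" "l1 + l2 \<le> 1"
      and w: "adjacent_or_eq E_cone l1 (Inl a) w" "adjacent_or_eq E_cone l2 w (Inl (a \<otimes> s))"
      by (rule cone_gen_step[OF s(1,2)])
    have "reachable E_cone (Inl a) (Inl (a \<otimes> s))"
      using reachable_trans[OF reachable_if_adjacent_or_eq[OF w(1)] reachable_if_adjacent_or_eq[OF w(2)]] .
    then show ?thesis using s(3) by simp
  qed
  have group_part: "reachable E_cone (Inl g) (Inl \<one>)" if g: "g \<in> carrier G" for g
  proof -
    obtain es where "wchain E_rel g es \<one>" using rel_connected g unfolding graph_connected_def by blast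
    then show ?thesis by (rule reachable_image[where F=Inl, rotated]) (rule edge)
  qed
  fix x assume "x \<in> V_cone"
  then consider g where "g \<in> carrier G" "x = Inl g" | u where "u \<in> V_cos" "x = Inr u"
    unfolding cone_vertex_iff by blast
  then show "reachable E_cone x (Inl \<one>)"
  proof cases
    case 1
    then show ?thesis using group_part by simp
  next
    case 2
    then obtain i g where ig: "x = Inr (i, g <# H i)" "i \<in> {1..m}" "g \<in> carrier G"
      using cos_vertex_iff by blast
    have "reachable E_cone (Inl g) x" using reachable_edge[OF cone_edgeI[OF ig(3,2)]] ig(1) by simp
    then show ?thesis using reachable_trans[OF reachable_sym group_part[OF ig(3)]] by blast
  qed
qed

interpretation Z: pseudometric V_cone "gdist E_cone"
  by (rule gdist_pseudometric[OF cone_connected cone_nonneg_lengths])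

lemma cone_dist_le_rel:
  assumes "a \<in> carrier G" "b \<in> carrier G"
  shows "gdist E_cone (Inl a) (Inl b) \<le> gdist E_rel a b"
proof -
  have "gdist E_cone (Inl a) (Inl b) \<le> 1 * gdist E_rel a b"
  proof (rule gdist_lipschitz[OF Z.pseudometric_axioms rel_edges_in _ _ _ rel_connected assms])
    show "Inl x \<in> V_cone" if "x \<in> carrier G" for x using that cone_vertex_iff by blast
    fix x y l assume "(x, y, l) \<in> E_rel"
    then obtain s where s: "x \<in> carrier G" "s \<in> gens" "y = x \<otimes> s" "l = 1" unfolding rel_edge_iff by blast
    obtain w l1 l2 where w: "w \<in> V_cone" "0 \<le> l1" "0 \<le> l2" "l1 + l2 \<le> 1"
      "adjacent_or_eq E_cone l1 (Inl x) w" "adjacent_or_eq E_cone l2 w (Inl (x \<otimes> s))"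
      by (rule cone_gen_step[OF s(1,2)])
    have "x \<otimes> s \<in> carrier G" using s gens_carrier by blast
    then have "gdist E_cone (Inl x) (Inl (x \<otimes> s)) \<le> gdist E_cone (Inl x) w + gdist E_cone w (Inl (x \<otimes> s))"
      using Z.triangle w(1) s(1) cone_vertex_iff by blast
    also have "\<dots> \<le> l1 + l2"
      using gdist_le_if_adjacent_or_eq[OF cone_nonneg_lengths w(2,5)]
        gdist_le_if_adjacent_or_eq[OF cone_nonneg_lengths w(3,6)] by simp
    finally show "gdist E_cone (Inl x) (Inl y) \<le> 1 * l" using w(4) s(3,4) by simp
  qed simp
  then show ?thesis by simp
qed

text \<open>For the converse, \<open>x \<mapsto> d\<^sub>r\<^sub>e\<^sub>l(a, x)\<close> extends to the cone points (by the distance to the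
  coset plus \<open>1/2\<close>) as a \<open>1\<close>-Lipschitz function on the coned-off graph; cosets have diameter
  at most \<open>1\<close> in the relative Cayley graph.\<close>

lemma rel_dist_le_cone:
  assumes ab: "a \<in> carrier G" "b \<in> carrier G"
  shows "gdist E_rel a b \<le> gdist E_cone (Inl a) (Inl b)"
proof -
  define \<phi> :: "'a + (nat \<times> 'a set) \<Rightarrow> real" where
    "\<phi> x = (case x of Inl y \<Rightarrow> gdist E_rel a y | Inr u \<Rightarrow> Inf (gdist E_rel a ` snd u) + 1 / 2)" for x
  have real_abs_pseudometric: "pseudometric UNIV (\<lambda>x y :: real. \<bar>x - y\<bar>)"
    by unfold_locales auto
  have "\<bar>\<phi> x - \<phi> y\<bar> \<le> 1 * l" if "(x, y, l) \<in> E_cone" for x y l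
    using that unfolding cone_edge_iff
  proof (elim disjE exE conjE)
    fix g s assume h: "x = Inl g" "y = Inl (g \<otimes> s)" "l = 1" "g \<in> carrier G" "s \<in> S"
    have gs: "g \<otimes> s \<in> carrier G" using h S_carrier by blast
    have "gdist E_rel g (g \<otimes> s) \<le> 1" using rel_dist_step[OF h(4)] h(5) by simp
    then show ?thesis
      using R.triangle[OF ab(1) h(4) gs] R.triangle[OF ab(1) gs h(4)] R.commute[OF gs h(4)] h(1-3)
      unfolding \<phi>_def by simp
  next
    fix g i assume h: "x = Inl g" "y = Inr (i, g <# H i)" "l = 1 / 2" "g \<in> carrier G" "i \<in> {1..m}"
    define I where "I = Inf (gdist E_rel a ` (g <# H i))"
    have gC: "g \<in> g <# H i" using coset_self[OF h(5,4)] .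
    have "bdd_below (gdist E_rel a ` (g <# H i))"
      using R.nonneg[OF ab(1)] coset_carrier[OF h(5,4)] by (intro bdd_belowI[of _ 0]) blast
    then have "I \<le> gdist E_rel a g" unfolding I_def using gC by (intro cInf_lower) auto
    moreover have "gdist E_rel a g - 1 \<le> I"
      unfolding I_def
    proof (rule cInf_greatest)
      fix z assume "z \<in> gdist E_rel a ` (g <# H i)"
      then obtain c where c: "c \<in> g <# H i" "z = gdist E_rel a c" by blast
      have "c \<in> carrier G" using coset_carrier[OF h(5,4) c(1)] .
      then have "gdist E_rel a g \<le> gdist E_rel a c + gdist E_rel c g" using R.triangle ab(1) h(4) by blast
      moreover have "gdist E_rel c g \<le> 1" using rel_dist_coset[OF h(5,4) c(1) gC] .
      ultimately show "gdist E_rel a g - 1 \<le> z" using c(2) by linarith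
    qed (use gC in blast)
    moreover have "\<phi> x = gdist E_rel a g" "\<phi> y = I + 1 / 2" unfolding \<phi>_def I_def using h by auto
    ultimately show ?thesis using h(3) by simp
  qed
  then have "\<bar>\<phi> (Inl a) - \<phi> (Inl b)\<bar> \<le> 1 * gdist E_cone (Inl a) (Inl b)"
    by (intro gdist_lipschitz[OF real_abs_pseudometric cone_edges_in _ _ _ cone_connected])
      (use ab cone_vertex_iff in auto)
  then show ?thesis using R.zero[OF ab(1)] unfolding \<phi>_def by simp
qed

definition cone_base :: "'a + (nat \<times> 'a set) \<Rightarrow> 'a" where
  "cone_base x = (case x of Inl a \<Rightarrow> a | Inr u \<Rightarrow> coset_rep u)"

lemma cone_base:
  assumes "x \<in> V_cone"
  shows "cone_base x \<in> carrier G" and "gdist E_cone x (Inl (cone_base x)) \<le> 1 / 2"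
proof -
  consider a where "a \<in> carrier G" "x = Inl a" | u where "u \<in> V_cos" "x = Inr u"
    using assms cone_vertex_iff by blast
  then have "cone_base x \<in> carrier G \<and> gdist E_cone x (Inl (cone_base x)) \<le> 1 / 2"
  proof cases
    case 1
    then show ?thesis using Z.zero assms unfolding cone_base_def by simp
  next
    case 2
    then obtain i g where u: "u = (i, g <# H i)" "i \<in> {1..m}" "g \<in> carrier G"
      using cos_vertex_iff by blast
    have rep: "coset_rep u \<in> carrier G" "coset_rep u <# H i = g <# H i"
      using coset_rep_mem[OF 2(1)] coset_eq[OF u(2,3)] u(1) by auto
    have "(Inl (coset_rep u), x, 1 / 2) \<in> E_cone" using cone_edgeI[OF rep(1) u(2)] rep(2) u(1) 2(2) by simp
    then have "gdist E_cone x (Inl (coset_rep u)) \<le> 1 / 2"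
      by (intro gdist_le_if_adjacent_or_eq[OF cone_nonneg_lengths]) (auto simp: adjacent_or_eq_def)
    then show ?thesis using rep(1) 2(2) unfolding cone_base_def by simp
  qed
  then show "cone_base x \<in> carrier G" "gdist E_cone x (Inl (cone_base x)) \<le> 1 / 2" by auto
qed

lemma cone_dist_Inl: "a \<in> carrier G \<Longrightarrow> b \<in> carrier G \<Longrightarrow> gdist E_cone (Inl a) (Inl b) = gdist E_rel a b"
  using cone_dist_le_rel rel_dist_le_cone by (simp add: order_antisym)

lemma cone_base_dist:
  assumes xy: "x \<in> V_cone" "y \<in> V_cone"
  shows "\<bar>gdist E_rel (cone_base x) (cone_base y) - gdist E_cone x y\<bar> \<le> 1"
proof -
  have V: "Inl (cone_base x) \<in> V_cone" "Inl (cone_base y) \<in> V_cone"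
    using cone_base(1) xy cone_vertex_iff by blast+
  have "gdist E_cone x y \<le> gdist E_cone x (Inl (cone_base x))
      + gdist E_cone (Inl (cone_base x)) (Inl (cone_base y)) + gdist E_cone (Inl (cone_base y)) y"
    using Z.triangle3[OF xy(1) V xy(2)] .
  moreover have "gdist E_cone (Inl (cone_base x)) (Inl (cone_base y)) \<le> gdist E_cone (Inl (cone_base x)) x
      + gdist E_cone x y + gdist E_cone y (Inl (cone_base y))"
    using Z.triangle3[OF V(1) xy V(2)] .
  ultimately show ?thesis
    using cone_dist_Inl[OF cone_base(1)[OF xy(1)] cone_base(1)[OF xy(2)]]
      cone_base(2)[OF xy(1)] cone_base(2)[OF xy(2)] Z.commute[OF V(1) xy(1)] Z.commute[OF V(2) xy(2)]
    by (simp add: abs_le_iff)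
qed

theorem rel_hyperbolic_iff_cone_hyperbolic:
  "(\<exists>\<delta>. gromov_hyperbolic (carrier G) (gdist E_rel) \<delta>) \<longleftrightarrow> (\<exists>\<delta>. gromov_hyperbolic V_cone (gdist E_cone) \<delta>)"
proof
  assume "\<exists>\<delta>. gromov_hyperbolic (carrier G) (gdist E_rel) \<delta>"
  then obtain \<delta> where hyp: "gromov_hyperbolic (carrier G) (gdist E_rel) \<delta>" by blast
  have "gromov_hyperbolic V_cone (gdist E_cone) (\<delta> + 3 * 1)"
    using gromov_hyperbolic_pullback[OF hyp, where f=cone_base and W=V_cone and dW="gdist E_cone" and c=1]
      cone_base(1) cone_base_dist by blast
  then show "\<exists>\<delta>. gromov_hyperbolic V_cone (gdist E_cone) \<delta>" by blast
next
  assume "\<exists>\<delta>. gromov_hyperbolic V_cone (gdist E_cone) \<delta>"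
  then obtain \<delta> where hyp: "gromov_hyperbolic V_cone (gdist E_cone) \<delta>" by blast
  have "Inl a \<in> V_cone" if "a \<in> carrier G" for a using that cone_vertex_iff by blast
  then have "gromov_hyperbolic (carrier G) (gdist E_rel) (\<delta> + 3 * 0)"
    using gromov_hyperbolic_pullback[OF hyp, where f=Inl and W="carrier G" and dW="gdist E_rel" and c=0]
      cone_dist_Inl by simp
  then show "\<exists>\<delta>. gromov_hyperbolic (carrier G) (gdist E_rel) \<delta>" by blast
qed

end

lemma hyperbolic_graph_iff:
  "hyperbolic_graph V E \<longleftrightarrow> graph_connected V E \<and> (\<exists>\<delta>. gromov_hyperbolic V (gdist E) \<delta>)"
  unfolding hyperbolic_graph_def gromov_hyperbolic_def by simp

theorem lemma2p1:
  fixes G :: "('a, 'b) monoid_scheme" and H :: "nat \<Rightarrow> 'a set" and m :: nat and S :: "'a set"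
  assumes "group G"
    and "m \<ge> 1"
    and "\<And>i. i \<in> {1..m} \<Longrightarrow> subgroup (H i) G"
    and "finite S" and "S \<subseteq> carrier G"
    and "generate G (S \<union> (\<Union>i\<in>{1..m}. H i)) = carrier G"
  shows "(hyperbolic_graph (carrier G) (rel_cayley_edges G S H m) \<longleftrightarrow>
            hyperbolic_graph (coset_vertices G H m) (coset_edges G S H m))
       \<and> (generate G S = carrier G \<longrightarrow>
            (hyperbolic_graph (carrier G) (rel_cayley_edges G S H m) \<longleftrightarrow>
             hyperbolic_graph (coned_vertices G H m) (coned_edges G S H m)))"
proof -
  interpret relative_generating_set G H m S
    by (intro relative_generating_set.intro relative_generating_set_axioms.intro) (use assms in auto)
  show ?thesis
    unfolding hyperbolic_graph_iff
    using rel_hyperbolic_iff_coset_hyperbolic rel_hyperbolic_iff_cone_hyperbolic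
      rel_connected cos_connected cone_connected by blast
qed

end
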